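(* Let $C\subset\mathbb{R}^d$ be a convex body that is lattice complete with respect to a $d$-dimensional lattice $\Lambda$, and let $k$ be the dimension of the linear span of the set of diameter directions $v\in\Lambda$ of $C$. Then $C$ is a polytope with at most $2^{k+1}-2$ facets.
   Context: A convex body is a compact convex set with non-empty interior. A lattice $\Lambda\subset\mathbb{R}^d$ is a discrete subgroup spanning $\mathbb{R}^d$. A segment $[a,b]$ is a lattice segment if $b-a$ is parallel to a nonzero vector of $\Lambda$; its lattice length is $|b-a|/|v|$ where $v$ generates $\Lambda\cap\mathrm{span}\{b-a\}$ and is a positive multiple of $b-a$. The lattice diameter $\mathrm{diam}_\Lambda(C)$ is the maximum lattice length of a lattice segment in $C$. A diameter direction of $C$ is a vector $v\in\Lambda\setminus\{0\}$ such that $C$ contains a segment $[a,a+\mathrm{diam}_\Lambda(C)\,v]$. $C$ is lattice complete if no convex body $C'\supsetneq C$ has $\mathrm{diam}_\Lambda(C')=\mathrm{diam}_\Lambda(C)$. *)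

theory Defs
  imports "HOL-Analysis.Analysis"
begin

definition convex_body :: "'a::euclidean_space set \<Rightarrow> bool" where
  "convex_body C \<longleftrightarrow> compact C \<and> convex C \<and> interior C \<noteq> {}"

definition is_lattice :: "'a::euclidean_space set \<Rightarrow> bool" where
  "is_lattice L \<longleftrightarrow> 0 \<in> L \<and> (\<forall>x\<in>L. \<forall>y\<in>L. x + y \<in> L) \<and> (\<forall>x\<in>L. - x \<in> L)
     \<and> (\<forall>x\<in>L. \<exists>e>0. ball x e \<inter> L = {x}) \<and> span L = UNIV"

definition lattice_segment :: "'a::euclidean_space set \<Rightarrow> 'a \<Rightarrow> 'a \<Rightarrow> bool" where
  "lattice_segment L a b \<longleftrightarrow> (\<exists>v\<in>L. v \<noteq> 0 \<and> (\<exists>t::real. b - a = t *\<^sub>R v))"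

definition lattice_length :: "'a::euclidean_space set \<Rightarrow> 'a \<Rightarrow> 'a \<Rightarrow> real" where
  "lattice_length L a b =
     norm (b - a) / norm (THE v. v \<in> L \<and> (\<exists>c>0. v = c *\<^sub>R (b - a)) \<and>
                          L \<inter> span {b - a} = range (\<lambda>n::int. of_int n *\<^sub>R v))"

definition lattice_diam :: "'a::euclidean_space set \<Rightarrow> 'a set \<Rightarrow> real" where
  "lattice_diam L C = Sup {lattice_length L a b | a b. a \<in> C \<and> b \<in> C \<and> lattice_segment L a b}"

definition diameter_directions :: "'a::euclidean_space set \<Rightarrow> 'a set \<Rightarrow> 'a set" where
  "diameter_directions L C =
     {v \<in> L. v \<noteq> 0 \<and> (\<exists>a. closed_segment a (a + lattice_diam L C *\<^sub>R v) \<subseteq> C)}"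

definition lattice_complete :: "'a::euclidean_space set \<Rightarrow> 'a set \<Rightarrow> bool" where
  "lattice_complete L C \<longleftrightarrow>
     \<not> (\<exists>C'. convex_body C' \<and> C \<subset> C' \<and> lattice_diam L C' = lattice_diam L C)"

end

theory Submission
  imports Defs
begin

text \<open>
  Let \<open>d\<close> be the lattice diameter of \<open>C\<close> and \<open>W\<close> the set of diameter directions.
  For \<open>w \<in> W\<close> the interiors of \<open>C\<close> and \<open>C + d w\<close> are disjoint, so \<open>C\<close> lies in a
  slab bounded by a hyperplane separating them and its translate by \<open>- d w\<close>. Completeness
  forces \<open>C\<close> to be the intersection of these finitely many slabs: cutting the slabs with a
  small neighbourhood of \<open>C\<close> creates no longer lattice chords, and \<open>C\<close> is then clopen in
  the connected intersection. Hence \<open>C\<close> is a polytope.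

  Tilting the separating hyperplanes shows that the relative interior of every facet \<open>F\<close>
  contains a point \<open>x\<close> with \<open>x - d w\<^sub>F \<in> C\<close> for some lattice vector \<open>w\<^sub>F\<close>, which is then a
  diameter direction not in \<open>2 L\<close>. Midpoints of such points on distinct facets are interior
  points, so \<open>w\<^sub>F \<equiv> w\<^sub>G\<close> modulo \<open>2 L\<close> forces \<open>w\<^sub>F = - w\<^sub>G\<close>.
\<close>

section \<open>Discrete subgroups\<close>

definition add_subgroup :: "'a::real_normed_vector set \<Rightarrow> bool" where
  "add_subgroup G \<longleftrightarrow> 0 \<in> G \<and> (\<forall>x\<in>G. \<forall>y\<in>G. x + y \<in> G) \<and> (\<forall>x\<in>G. - x \<in> G)"

definition discrete_subgroup :: "'a::real_normed_vector set \<Rightarrow> bool" where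
  "discrete_subgroup G \<longleftrightarrow> add_subgroup G \<and> uniform_discrete G"

lemma add_subgroup_0: "add_subgroup G \<Longrightarrow> 0 \<in> G"
  by (simp add: add_subgroup_def)

lemma add_subgroup_add: "add_subgroup G \<Longrightarrow> x \<in> G \<Longrightarrow> y \<in> G \<Longrightarrow> x + y \<in> G"
  by (simp add: add_subgroup_def)

lemma add_subgroup_uminus: "add_subgroup G \<Longrightarrow> x \<in> G \<Longrightarrow> - x \<in> G"
  by (simp add: add_subgroup_def)

lemma add_subgroup_diff: "add_subgroup G \<Longrightarrow> x \<in> G \<Longrightarrow> y \<in> G \<Longrightarrow> x - y \<in> G"
  using add_subgroup_add[of G x "- y"] add_subgroup_uminus[of G y] by simp

lemma add_subgroup_scaleR_of_nat: "add_subgroup G \<Longrightarrow> x \<in> G \<Longrightarrow> of_nat n *\<^sub>R x \<in> G"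
  by (induction n) (simp_all add: add_subgroup_0 add_subgroup_add scaleR_add_left)

lemma add_subgroup_scaleR_of_int: "add_subgroup G \<Longrightarrow> x \<in> G \<Longrightarrow> of_int n *\<^sub>R x \<in> G"
  by (cases n rule: int_cases2)
    (simp_all add: add_subgroup_scaleR_of_nat add_subgroup_uminus)

lemma add_subgroup_Int_subspace: "add_subgroup G \<Longrightarrow> subspace S \<Longrightarrow> add_subgroup (G \<inter> S)"
  by (simp add: add_subgroup_def subspace_0 subspace_add subspace_neg)

lemma discrete_subgroupI:
  assumes "add_subgroup G" "e > 0" "\<And>x. x \<in> G \<Longrightarrow> x \<noteq> 0 \<Longrightarrow> e \<le> norm x"
  shows "discrete_subgroup G"
  unfolding discrete_subgroup_def
proof
  show "uniform_discrete G"
  proof (rule uniformI2)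
    fix x y assume "x \<in> G" "y \<in> G" "x \<noteq> y"
    then show "e \<le> dist x y"
      using assms(3)[of "x - y"] add_subgroup_diff[OF assms(1)] by (simp add: dist_norm)
  qed (fact assms)
qed (fact assms)

lemma discrete_subgroup_norm_gap:
  assumes "discrete_subgroup G"
  obtains e where "e > 0" "\<And>x. x \<in> G \<Longrightarrow> x \<noteq> 0 \<Longrightarrow> e \<le> norm x"
proof -
  obtain e where "e > 0" "\<forall>x\<in>G. \<forall>y\<in>G. dist x y < e \<longrightarrow> x = y"
    using assms by (auto simp: discrete_subgroup_def uniform_discrete_def)
  moreover have "0 \<in> G" using assms add_subgroup_0 unfolding discrete_subgroup_def by blast
  ultimately show ?thesis
    using that[of e] by (metis dist_0_norm not_le)
qed

lemma discrete_subgroup_Int_subspace: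
  "discrete_subgroup G \<Longrightarrow> subspace S \<Longrightarrow> discrete_subgroup (G \<inter> S)"
  by (auto simp: discrete_subgroup_def add_subgroup_Int_subspace)

lemma is_lattice_imp_discrete_subgroup:
  assumes "is_lattice L" shows "discrete_subgroup L"
proof -
  have "add_subgroup L" using assms by (simp add: is_lattice_def add_subgroup_def)
  moreover obtain e where "e > 0" "ball 0 e \<inter> L = {0}"
    using assms unfolding is_lattice_def by blast
  then have "e \<le> norm x" if "x \<in> L" "x \<noteq> 0" for x
    using that by (metis IntI mem_ball_0 not_le singletonD)
  ultimately show ?thesis
    using \<open>e > 0\<close> by (intro discrete_subgroupI[of L e])
qed

lemma discrete_subgroup_finite_Int_bounded:
  fixes G :: "'a::euclidean_space set"
  assumes "discrete_subgroup G" "bounded S"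
  shows "finite (G \<inter> S)"
  using assms uniform_discrete_finite_iff uniform_discrete_subset
  by (metis bounded_Int discrete_subgroup_def inf_le1)

lemma discrete_subgroup_min_norm:
  fixes G :: "'a::euclidean_space set"
  assumes "discrete_subgroup G" "x \<in> G \<inter> S" "x \<noteq> 0"
  obtains g where "g \<in> G \<inter> S" "g \<noteq> 0" "\<And>y. y \<in> G \<inter> S \<Longrightarrow> y \<noteq> 0 \<Longrightarrow> norm g \<le> norm y"
proof -
  define A where "A = G \<inter> cball 0 (norm x) \<inter> S - {0}"
  have "finite A"
    unfolding A_def using discrete_subgroup_finite_Int_bounded[OF assms(1) bounded_cball] by auto
  moreover have "x \<in> A" using assms unfolding A_def by auto
  ultimately obtain g where "is_arg_min norm (\<lambda>y. y \<in> A) g"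
    using ex_is_arg_min_if_finite[of A norm] by blast
  then show ?thesis
    by (intro that[of g]) (fastforce simp: A_def is_arg_min_def not_less)+
qed

lemma add_subgroup_line_eq_int_multiples:
  assumes "add_subgroup G" "g \<in> G"
    and min: "\<And>y. y \<in> G \<inter> span {g} \<Longrightarrow> y \<noteq> 0 \<Longrightarrow> norm g \<le> norm y"
  shows "G \<inter> span {g} = range (\<lambda>n::int. of_int n *\<^sub>R g)"
proof
  show "range (\<lambda>n::int. of_int n *\<^sub>R g) \<subseteq> G \<inter> span {g}"
    using assms add_subgroup_scaleR_of_int by (auto simp: span_singleton)
next
  show "G \<inter> span {g} \<subseteq> range (\<lambda>n::int. of_int n *\<^sub>R g)"
  proof
    fix x assume x: "x \<in> G \<inter> span {g}"
    then obtain r where r: "x = r *\<^sub>R g" by (auto simp: span_singleton)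
    define y where "y = x - of_int \<lfloor>r\<rfloor> *\<^sub>R g"
    have y: "y = frac r *\<^sub>R g"
      unfolding y_def r frac_def by (simp add: algebra_simps)
    have "y \<in> G"
      unfolding y_def using x assms add_subgroup_diff add_subgroup_scaleR_of_int by blast
    moreover have "y \<in> span {g}"
      by (simp add: y span_base span_scale)
    moreover have "norm y < norm g" if "g \<noteq> 0"
      using frac_lt_1[of r] frac_ge_0[of r] that by (simp add: y)
    ultimately have "y = 0"
      using min by fastforce
    then show "x \<in> range (\<lambda>n::int. of_int n *\<^sub>R g)"
      by (auto simp: y_def)
  qed
qed

section \<open>Lattice length and lattice diameter\<close>

lemma int_multiples_eq_imp_eq:
  fixes g v :: "'a::real_vector"
  assumes eq: "range (\<lambda>n::int. of_int n *\<^sub>R g) = range (\<lambda>n::int. of_int n *\<^sub>R v)"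
    and v: "v = c *\<^sub>R g" "c > 0" and "g \<noteq> 0"
  shows "v = g"
proof -
  have "v \<in> range (\<lambda>n::int. of_int n *\<^sub>R v)" "g \<in> range (\<lambda>n::int. of_int n *\<^sub>R g)"
    by (auto intro!: range_eqI[of _ _ 1])
  then have "v \<in> range (\<lambda>n::int. of_int n *\<^sub>R g)" "g \<in> range (\<lambda>n::int. of_int n *\<^sub>R v)"
    using eq by auto
  then obtain m n :: int where m: "v = of_int m *\<^sub>R g" and n: "g = of_int n *\<^sub>R v"
    by blast
  have c: "c = of_int m"
    using m v \<open>g \<noteq> 0\<close> by (metis scaleR_cancel_right)
  have "1 *\<^sub>R g = of_int (n * m) *\<^sub>R g"
    using n m by simp
  then have "n * m = 1"
    using \<open>g \<noteq> 0\<close> by (metis of_int_eq_1_iff scaleR_cancel_right)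
  then have "m = 1"
    using c \<open>c > 0\<close> by (auto simp: zmult_eq_1_iff)
  then show ?thesis
    using m by simp
qed

lemma span_singleton_eq:
  assumes "a \<in> span {b}" "a \<noteq> 0"
  shows "span {a} = span {b}"
proof -
  obtain k where a: "a = k *\<^sub>R b"
    using assms(1) by (auto simp: span_singleton)
  with assms(2) have "b = (1 / k) *\<^sub>R a"
    by auto
  then have "b \<in> span {a}"
    by (metis span_base span_scale singletonI)
  then show ?thesis
    using assms(1) by (simp add: span_eq)
qed

lemma discrete_subgroup_primitive:
  fixes G :: "'a::euclidean_space set"
  assumes G: "discrete_subgroup G" and v: "v \<in> G" "v \<noteq> 0" and d: "d \<in> span {v}" "d \<noteq> 0"
  obtains g c where "g \<in> G" "c > 0" "g = c *\<^sub>R d"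
    "G \<inter> span {g} = range (\<lambda>n::int. of_int n *\<^sub>R g)"
proof -
  obtain g0 where g0: "g0 \<in> G \<inter> span {v}" "g0 \<noteq> 0"
    and min: "\<And>y. y \<in> G \<inter> span {v} \<Longrightarrow> y \<noteq> 0 \<Longrightarrow> norm g0 \<le> norm y"
    using discrete_subgroup_min_norm[OF G, of v "span {v}"] v span_base by blast
  have "g0 \<in> span {d}"
    using g0 d span_singleton_eq by blast
  then obtain s where s: "g0 = s *\<^sub>R d"
    by (auto simp: span_singleton)
  define g where "g = (if s > 0 then g0 else - g0)"
  have sub: "add_subgroup G"
    using G by (simp add: discrete_subgroup_def)
  have g: "g \<in> G" "g \<noteq> 0" "norm g = norm g0" "g = \<bar>s\<bar> *\<^sub>R d"
    using g0 s add_subgroup_uminus[OF sub] by (auto simp: g_def)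
  have "g \<in> span {v}"
    using g0 by (simp add: g_def span_neg)
  then have "span {g} = span {v}"
    using g(2) by (rule span_singleton_eq)
  then have "G \<inter> span {g} = range (\<lambda>n::int. of_int n *\<^sub>R g)"
    using sub g min by (intro add_subgroup_line_eq_int_multiples) auto
  moreover have "\<bar>s\<bar> > 0"
    using g s by auto
  ultimately show ?thesis
    using that g by blast
qed

lemma lattice_length_primitive:
  assumes g: "g \<in> L" "g \<noteq> 0" "L \<inter> span {g} = range (\<lambda>n::int. of_int n *\<^sub>R g)" and "t > 0"
  shows "lattice_length L a (a + t *\<^sub>R g) = t"
proof -
  have span_tg: "span {t *\<^sub>R g} = span {g}"
    using assms by (intro span_singleton_eq) (auto intro: span_base span_scale)
  have the: "(THE v. v \<in> L \<and> (\<exists>c>0. v = c *\<^sub>R (t *\<^sub>R g)) \<and>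
      L \<inter> span {t *\<^sub>R g} = range (\<lambda>n::int. of_int n *\<^sub>R v)) = g"
  proof (rule the_equality)
    show "g \<in> L \<and> (\<exists>c>0. g = c *\<^sub>R (t *\<^sub>R g)) \<and>
        L \<inter> span {t *\<^sub>R g} = range (\<lambda>n::int. of_int n *\<^sub>R g)"
      using assms span_tg by (auto intro!: exI[of _ "1 / t"])
  next
    fix v assume v: "v \<in> L \<and> (\<exists>c>0. v = c *\<^sub>R (t *\<^sub>R g)) \<and>
        L \<inter> span {t *\<^sub>R g} = range (\<lambda>n::int. of_int n *\<^sub>R v)"
    then obtain c where "c > 0" "v = (c * t) *\<^sub>R g"
      by auto
    then show "v = g"
      using int_multiples_eq_imp_eq[of g v "c * t"] v g span_tg \<open>t > 0\<close> by auto
  qed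
  show ?thesis
    using assms unfolding lattice_length_def add_diff_cancel_left' the by simp
qed

lemma lattice_length_same: "lattice_length L a a = 0"
  by (simp add: lattice_length_def)

lemma lattice_segment_length:
  assumes L: "is_lattice L" and "lattice_segment L a b" "b \<noteq> a"
  obtains g where "g \<in> L" "g \<noteq> 0" "L \<inter> span {g} = range (\<lambda>n::int. of_int n *\<^sub>R g)"
    "lattice_length L a b > 0" "b = a + lattice_length L a b *\<^sub>R g"
proof -
  obtain v t where v: "v \<in> L" "v \<noteq> 0" "b - a = t *\<^sub>R v"
    using assms(2) unfolding lattice_segment_def by blast
  have "b - a \<in> span {v}"
    by (simp add: v span_base span_scale)
  then obtain g c where g: "g \<in> L" "c > 0" "g = c *\<^sub>R (b - a)"
    and line: "L \<inter> span {g} = range (\<lambda>n::int. of_int n *\<^sub>R g)"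
    using discrete_subgroup_primitive[OF is_lattice_imp_discrete_subgroup[OF L] v(1,2)] assms(3)
    by (metis eq_iff_diff_eq_0)
  have "g \<noteq> 0"
    using g assms(3) by auto
  have b: "b = a + (1 / c) *\<^sub>R g"
    using g by auto
  then have "lattice_length L a b = 1 / c"
    using lattice_length_primitive[OF g(1) \<open>g \<noteq> 0\<close> line, of "1 / c" a] g(2) by simp
  then show ?thesis
    using that g(1,2) \<open>g \<noteq> 0\<close> line b by simp
qed

lemma lattice_length_ge:
  assumes L: "is_lattice L" and w: "w \<in> L" "w \<noteq> 0" and s: "s > 0"
  shows "s \<le> lattice_length L a (a + s *\<^sub>R w)"
proof -
  let ?l = "lattice_length L a (a + s *\<^sub>R w)"
  have "lattice_segment L a (a + s *\<^sub>R w)"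
    using w by (auto simp: lattice_segment_def)
  moreover have "a + s *\<^sub>R w \<noteq> a"
    using w s by simp
  ultimately obtain g where g: "g \<noteq> 0" "L \<inter> span {g} = range (\<lambda>n::int. of_int n *\<^sub>R g)"
    "?l > 0" "s *\<^sub>R w = ?l *\<^sub>R g"
    using lattice_segment_length[OF L] by (metis add_left_cancel)
  have "w = (1 / s) *\<^sub>R (s *\<^sub>R w)"
    using s by simp
  also have "\<dots> = (1 / s) *\<^sub>R (?l *\<^sub>R g)"
    by (simp only: g(4)[symmetric])
  also have "\<dots> = (?l / s) *\<^sub>R g"
    by simp
  finally have w_eq: "w = (?l / s) *\<^sub>R g" .
  have "w \<in> span {g}"
    by (subst w_eq) (simp add: span_base span_scale)
  then obtain n :: int where "w = of_int n *\<^sub>R g"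
    using g(2) w(1) by blast
  then have l: "?l = s * of_int n"
    using g(1,4) by (metis scaleR_cancel_right scaleR_scaleR)
  then have "n \<ge> 1"
    using g(3) s by (simp add: zero_less_mult_iff)
  then show ?thesis
    using l s by simp
qed

lemma is_lattice_obtain_nonzero:
  assumes "is_lattice L"
  obtains w where "w \<in> L" "w \<noteq> 0"
proof -
  obtain b :: 'a where "b \<in> Basis"
    using nonempty_Basis by blast
  then have "b \<noteq> 0"
    by auto
  moreover have "b \<in> span L"
    using assms by (simp add: is_lattice_def)
  ultimately have "\<not> L \<subseteq> {0}"
    by (metis span_empty span_insert_0 span_mono subset_singletonD singletonD empty_iff)
  then show ?thesis
    using that by blast
qed

lemma lattice_segment_refl:
  assumes "is_lattice L" shows "lattice_segment L a a"
  using is_lattice_obtain_nonzero[OF assms] by (auto simp: lattice_segment_def)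

lemma bdd_above_lattice_lengths:
  assumes L: "is_lattice L" and "bounded K"
  shows "bdd_above {lattice_length L a b | a b. a \<in> K \<and> b \<in> K \<and> lattice_segment L a b}"
proof -
  obtain e where e: "e > 0" "\<And>x. x \<in> L \<Longrightarrow> x \<noteq> 0 \<Longrightarrow> e \<le> norm x"
    using discrete_subgroup_norm_gap[OF is_lattice_imp_discrete_subgroup[OF L]] by blast
  obtain R where R: "\<And>x. x \<in> K \<Longrightarrow> norm x \<le> R"
    using assms(2) bounded_iff by blast
  have "lattice_length L a b \<le> 2 * R / e"
    if ab: "a \<in> K" "b \<in> K" "lattice_segment L a b" for a b
  proof (cases "b = a")
    case True
    have "0 \<le> R"
      using R[OF ab(1)] norm_ge_zero[of a] by linarith
    then show ?thesis
      using True e(1) by (simp add: lattice_length_same)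
  next
    case False
    then obtain g where g: "g \<in> L" "g \<noteq> 0" "lattice_length L a b > 0"
      "b = a + lattice_length L a b *\<^sub>R g"
      using lattice_segment_length[OF L ab(3)] by metis
    have "lattice_length L a b * e \<le> lattice_length L a b * norm g"
      using e g by simp
    also have "\<dots> = norm (b - a)"
      using g(3) by (subst (2) g(4)) simp
    also have "\<dots> \<le> 2 * R"
      using R[OF ab(1)] R[OF ab(2)] norm_triangle_ineq4[of b a] by linarith
    finally show ?thesis
      using e(1) by (simp add: field_simps)
  qed
  then show ?thesis
    by (intro bdd_aboveI[of _ "2 * R / e"]) blast
qed

lemma lattice_diam_ge:
  assumes "is_lattice L" "bounded K" "a \<in> K" "a + s *\<^sub>R w \<in> K" "w \<in> L" "w \<noteq> 0" "s > 0"
  shows "s \<le> lattice_diam L K"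
proof -
  have "lattice_segment L a (a + s *\<^sub>R w)"
    using assms by (auto simp: lattice_segment_def)
  then have "lattice_length L a (a + s *\<^sub>R w) \<le> lattice_diam L K"
    unfolding lattice_diam_def using assms bdd_above_lattice_lengths
    by (intro cSup_upper) blast+
  then show ?thesis
    using lattice_length_ge[of L w s a] assms by linarith
qed

lemma lattice_diam_le:
  assumes L: "is_lattice L" and "K \<noteq> {}" "0 \<le> d"
    and chord: "\<And>a t g. a \<in> K \<Longrightarrow> a + t *\<^sub>R g \<in> K \<Longrightarrow> g \<in> L \<Longrightarrow> g \<noteq> 0 \<Longrightarrow> t > 0 \<Longrightarrow> t \<le> d"
  shows "lattice_diam L K \<le> d"
  unfolding lattice_diam_def
proof (rule cSup_least)
  show "{lattice_length L a b | a b. a \<in> K \<and> b \<in> K \<and> lattice_segment L a b} \<noteq> {}"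
    using assms(2) lattice_segment_refl[OF L] by blast
next
  fix l assume "l \<in> {lattice_length L a b | a b. a \<in> K \<and> b \<in> K \<and> lattice_segment L a b}"
  then obtain a b where ab: "l = lattice_length L a b" "a \<in> K" "b \<in> K" "lattice_segment L a b"
    by blast
  show "l \<le> d"
  proof (cases "b = a")
    case True
    then show ?thesis
      using ab(1) assms(3) by (simp add: lattice_length_same)
  next
    case False
    then show ?thesis
      using lattice_segment_length[OF L ab(4)] chord ab by metis
  qed
qed

lemma lattice_diam_mono:
  assumes L: "is_lattice L" and "K \<subseteq> K'" "K \<noteq> {}" "bounded K'"
  shows "lattice_diam L K \<le> lattice_diam L K'"
  unfolding lattice_diam_def
proof (rule cSup_subset_mono)
  show "{lattice_length L a b | a b. a \<in> K \<and> b \<in> K \<and> lattice_segment L a b} \<noteq> {}"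
    using assms(3) lattice_segment_refl[OF L] by blast
  show "bdd_above {lattice_length L a b | a b. a \<in> K' \<and> b \<in> K' \<and> lattice_segment L a b}"
    using bdd_above_lattice_lengths[OF L assms(4)] .
qed (use assms(2) in blast)

lemma lattice_diam_gt_interior_chord:
  assumes L: "is_lattice L" and "bounded K" "a \<in> K" "a + t *\<^sub>R w \<in> interior K"
    and w: "w \<in> L" "w \<noteq> 0" and "t > 0"
  shows "t < lattice_diam L K"
proof -
  obtain r where r: "r > 0" "ball (a + t *\<^sub>R w) r \<subseteq> K"
    using assms(4) by (auto simp: mem_interior)
  define s where "s = r / (2 * norm w)"
  have s: "s > 0" "norm (s *\<^sub>R w) < r"
    using r w unfolding s_def by auto
  then have "a + (t + s) *\<^sub>R w \<in> K"
    using r by (auto simp: dist_norm algebra_simps)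
  then have "t + s \<le> lattice_diam L K"
    using assms s by (intro lattice_diam_ge[of L K a]) auto
  then show ?thesis
    using s by simp
qed

lemma lattice_diam_pos:
  assumes L: "is_lattice L" and C: "convex_body C"
  shows "0 < lattice_diam L C"
proof -
  obtain x where "x \<in> interior C"
    using C unfolding convex_body_def by blast
  then obtain r where r: "r > 0" "ball x r \<subseteq> C"
    by (auto simp: mem_interior)
  obtain w where w: "w \<in> L" "w \<noteq> 0"
    using is_lattice_obtain_nonzero[OF L] by blast
  define s where "s = r / (2 * norm w)"
  have s: "s > 0" "norm (s *\<^sub>R w) < r"
    using r w unfolding s_def by auto
  then have "x + s *\<^sub>R w \<in> C" "x \<in> C"
    using r by (auto simp: dist_norm)
  moreover have "bounded C"
    using C unfolding convex_body_def by (simp add: compact_imp_bounded)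
  ultimately have "s \<le> lattice_diam L C"
    using L w s by (intro lattice_diam_ge[of L C x]) auto
  then show ?thesis
    using s by simp
qed

lemma diameter_directions_iff:
  assumes "convex C"
  shows "w \<in> diameter_directions L C \<longleftrightarrow>
    w \<in> L \<and> w \<noteq> 0 \<and> (\<exists>a\<in>C. a + lattice_diam L C *\<^sub>R w \<in> C)"
proof -
  have "closed_segment a b \<subseteq> C \<longleftrightarrow> a \<in> C \<and> b \<in> C" for a b
    using assms by (meson closed_segment_subset ends_in_segment subsetD)
  then show ?thesis
    unfolding diameter_directions_def by blast
qed

lemma finite_diameter_directions:
  assumes L: "is_lattice L" and C: "convex_body C"
  shows "finite (diameter_directions L C)"
proof -
  let ?d = "lattice_diam L C"
  have d: "?d > 0"
    using lattice_diam_pos[OF L C] .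
  have "convex C" "bounded C"
    using C unfolding convex_body_def by (auto simp: compact_imp_bounded)
  then obtain R where R: "\<And>x. x \<in> C \<Longrightarrow> norm x \<le> R" and cv: "convex C"
    using bounded_iff by blast
  have "diameter_directions L C \<subseteq> L \<inter> cball 0 (2 * R / ?d)"
  proof
    fix w assume "w \<in> diameter_directions L C"
    then obtain a where a: "w \<in> L" "a \<in> C" "a + ?d *\<^sub>R w \<in> C"
      unfolding diameter_directions_iff[OF cv] by blast
    then have "norm (?d *\<^sub>R w) \<le> 2 * R"
      using R[of a] R[of "a + ?d *\<^sub>R w"] norm_triangle_ineq4[of "a + ?d *\<^sub>R w" a] by simp
    then show "w \<in> L \<inter> cball 0 (2 * R / ?d)"
      using a d by (simp add: field_simps)
  qed
  then show ?thesis
    using discrete_subgroup_finite_Int_bounded[OF is_lattice_imp_discrete_subgroup[OF L]]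
    by (meson bounded_cball finite_subset)
qed

section \<open>Separating slabs of diameter directions\<close>

definition slab :: "'a::real_inner \<Rightarrow> real \<Rightarrow> real \<Rightarrow> 'a set" where
  "slab u lo hi = {y. lo \<le> u \<bullet> y \<and> u \<bullet> y \<le> hi}"

lemma slab_eq_Int_halfspaces: "slab u lo hi = {y. u \<bullet> y \<le> hi} \<inter> {y. lo \<le> u \<bullet> y}"
  by (auto simp: slab_def)

lemma closed_slab: "closed (slab u lo hi)"
  unfolding slab_eq_Int_halfspaces
  using closed_halfspace_le[of u hi] closed_halfspace_ge[of lo u] by (simp add: closed_Int inner_commute)

lemma convex_slab: "convex (slab u lo hi)"
  unfolding slab_eq_Int_halfspaces
  using convex_halfspace_le[of u hi] convex_halfspace_ge[of lo u] by (simp add: convex_Int)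

lemma polyhedron_slab:
  fixes u :: "'a::euclidean_space"
  shows "polyhedron (slab u lo hi)"
  unfolding slab_eq_Int_halfspaces
  using polyhedron_halfspace_le[of u hi] polyhedron_halfspace_ge[of lo u] by (simp add: polyhedron_Int)

lemma slab_chord_le:
  assumes "a \<in> slab u (h - d * (u \<bullet> w)) h" "a + t *\<^sub>R w \<in> slab u (h - d * (u \<bullet> w)) h"
    and "u \<bullet> w > 0"
  shows "t \<le> d"
proof -
  have "t * (u \<bullet> w) \<le> d * (u \<bullet> w)"
    using assms(1,2) by (auto simp: slab_def inner_add_right)
  then show ?thesis
    using assms(3) by simp
qed

lemma interior_nonempty_not_subset_hyperplane:
  fixes C :: "'a::euclidean_space set"
  assumes "interior C \<noteq> {}" "u \<noteq> 0"
  shows "\<not> C \<subseteq> {y. u \<bullet> y = c}"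
  using assms interior_mono[of C "{y. u \<bullet> y = c}"] by auto

definition diameter_slab :: "'a::euclidean_space set \<Rightarrow> 'a set \<Rightarrow> 'a \<Rightarrow> 'a \<Rightarrow> real \<Rightarrow> 'a set" where
  "diameter_slab L C w u h = slab u (h - lattice_diam L C * (u \<bullet> w)) h"

definition diameter_separator :: "'a::euclidean_space set \<Rightarrow> 'a set \<Rightarrow> 'a \<Rightarrow> 'a \<Rightarrow> real \<Rightarrow> bool" where
  "diameter_separator L C w u h \<longleftrightarrow> u \<noteq> 0 \<and> C \<subseteq> diameter_slab L C w u h"

lemma diameter_separator_iff:
  "diameter_separator L C w u h \<longleftrightarrow>
    u \<noteq> 0 \<and> (\<forall>y\<in>C. u \<bullet> y \<le> h) \<and> (\<forall>y\<in>C. h \<le> u \<bullet> (y + lattice_diam L C *\<^sub>R w))"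
  by (auto simp: diameter_separator_def diameter_slab_def slab_def inner_add_right algebra_simps)

lemma diameter_separator_uminus:
  "diameter_separator L C w u h \<Longrightarrow>
    diameter_separator L C (- w) (- u) (lattice_diam L C * (u \<bullet> w) - h)"
  by (auto simp: diameter_separator_def diameter_slab_def slab_def)

lemma diameter_separator_exists:
  assumes L: "is_lattice L" and C: "convex_body C" and w: "w \<in> diameter_directions L C"
  obtains u h where "diameter_separator L C w u h"
proof -
  let ?d = "lattice_diam L C"
  have cv: "convex C" and bC: "bounded C" and clC: "closed C" and iC: "interior C \<noteq> {}"
    using C unfolding convex_body_def by (auto simp: compact_imp_bounded compact_imp_closed)
  have wL: "w \<in> L" "w \<noteq> 0"
    using w diameter_directions_iff[OF cv] by auto
  define T where "T = (+) (?d *\<^sub>R w) ` interior C"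
  have "y + ?d *\<^sub>R w \<notin> interior C" if "y \<in> interior C" for y
    using lattice_diam_gt_interior_chord[OF L bC, of y ?d w] lattice_diam_pos[OF L C]
      that interior_subset wL by auto
  then have "interior C \<inter> T = {}"
    unfolding T_def by (auto simp: add.commute)
  moreover have "convex T" "T \<noteq> {}"
    unfolding T_def using cv iC by (auto intro: convex_translation convex_interior)
  ultimately obtain a b where ab: "a \<noteq> 0" "\<forall>x\<in>interior C. a \<bullet> x \<le> b" "\<forall>x\<in>T. b \<le> a \<bullet> x"
    using separating_hyperplane_sets[OF convex_interior[OF cv]] iC by metis
  have clos: "closure (interior C) = C"
    using convex_closure_interior[OF cv iC] clC by simp
  have "interior C \<subseteq> slab a (b - ?d * (a \<bullet> w)) b"
    using ab(2,3) by (auto simp: T_def slab_def inner_add_right)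
  then have "C \<subseteq> slab a (b - ?d * (a \<bullet> w)) b"
    using closure_minimal[OF _ closed_slab] clos by metis
  then show ?thesis
    using that ab(1) by (auto simp: diameter_separator_def diameter_slab_def)
qed

lemma diameter_separator_inner_pos:
  assumes L: "is_lattice L" and C: "convex_body C" and sep: "diameter_separator L C w u h"
  shows "0 < u \<bullet> w"
proof (rule ccontr)
  assume "\<not> 0 < u \<bullet> w"
  then have "lattice_diam L C * (u \<bullet> w) \<le> 0"
    using lattice_diam_pos[OF L C] by (simp add: mult_nonneg_nonpos)
  then have "C \<subseteq> {y. u \<bullet> y = h}"
    using sep by (auto simp: diameter_separator_def diameter_slab_def slab_def)
  moreover have "interior C \<noteq> {}" "u \<noteq> 0"
    using C sep by (auto simp: convex_body_def diameter_separator_def)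
  ultimately show False
    using interior_nonempty_not_subset_hyperplane by blast
qed

lemma non_diameter_chords_bounded_away:
  assumes L: "is_lattice L" and C: "convex_body C"
  obtains \<delta> where "\<delta> > 0"
    "\<And>x y g. x \<in> C \<Longrightarrow> y \<in> C \<Longrightarrow> g \<in> L \<Longrightarrow> g \<noteq> 0 \<Longrightarrow> g \<notin> diameter_directions L C \<Longrightarrow>
      \<delta> \<le> dist (y - x) (lattice_diam L C *\<^sub>R g)"
proof -
  let ?d = "lattice_diam L C"
  define X where "X = {?d *\<^sub>R g | g. g \<in> L \<and> g \<noteq> 0 \<and> g \<notin> diameter_directions L C}"
  have d: "?d > 0"
    using lattice_diam_pos[OF L C] .
  have cv: "convex C" and cC: "compact C"
    using C by (auto simp: convex_body_def)
  obtain e where e: "e > 0" "\<And>x. x \<in> L \<Longrightarrow> x \<noteq> 0 \<Longrightarrow> e \<le> norm x"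
    using discrete_subgroup_norm_gap[OF is_lattice_imp_discrete_subgroup[OF L]] by blast
  have "uniform_discrete X"
  proof (rule uniformI2)
    fix x y assume "x \<in> X" "y \<in> X" "x \<noteq> y"
    then obtain g1 g2 where g: "x = ?d *\<^sub>R g1" "y = ?d *\<^sub>R g2" "g1 \<in> L" "g2 \<in> L" "g1 \<noteq> g2"
      unfolding X_def by auto
    have "e \<le> norm (g1 - g2)"
      using e(2)[of "g1 - g2"] g L is_lattice_imp_discrete_subgroup add_subgroup_diff
      by (auto simp: discrete_subgroup_def)
    then show "?d * e \<le> dist x y"
      using d by (simp add: g dist_norm flip: scaleR_diff_right)
  qed (use d e in simp)
  then have clX: "closed X"
    by (rule uniform_discrete_imp_closed)
  define D where "D = {y - x | y x. y \<in> C \<and> x \<in> C}"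
  have cD: "compact D"
    unfolding D_def using compact_differences[OF cC cC] .
  have "g \<in> diameter_directions L C"
    if "x \<in> C" "y \<in> C" "y - x = ?d *\<^sub>R g" "g \<in> L" "g \<noteq> 0" for x y g
  proof -
    have "x + ?d *\<^sub>R g \<in> C"
      using that by (metis add.commute diff_add_cancel)
    then show ?thesis
      using that diameter_directions_iff[OF cv] by blast
  qed
  then have "D \<inter> X = {}"
    unfolding D_def X_def by blast
  then obtain \<delta> where "\<delta> > 0" "\<forall>z\<in>D. \<forall>x\<in>X. \<delta> \<le> dist z x"
    using separate_compact_closed[OF cD clX] by blast
  then show ?thesis
    using that[of \<delta>] unfolding D_def X_def by blast
qed

lemma non_diameter_chords_avoid_neighbourhood:
  assumes L: "is_lattice L" and C: "convex_body C"
  obtains \<epsilon> where "\<epsilon> > 0"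
    "\<And>a g. a \<in> (\<Union>c\<in>C. \<Union>v\<in>cball 0 \<epsilon>. {c + v}) \<Longrightarrow>
      a + lattice_diam L C *\<^sub>R g \<in> (\<Union>c\<in>C. \<Union>v\<in>cball 0 \<epsilon>. {c + v}) \<Longrightarrow> g \<in> L \<Longrightarrow> g \<noteq> 0 \<Longrightarrow>
      g \<in> diameter_directions L C"
proof -
  let ?d = "lattice_diam L C"
  obtain \<delta> where \<delta>: "\<delta> > 0"
    "\<And>x y g. x \<in> C \<Longrightarrow> y \<in> C \<Longrightarrow> g \<in> L \<Longrightarrow> g \<noteq> 0 \<Longrightarrow> g \<notin> diameter_directions L C \<Longrightarrow>
      \<delta> \<le> dist (y - x) (?d *\<^sub>R g)"
    using non_diameter_chords_bounded_away[OF L C] by metis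
  have "g \<in> diameter_directions L C"
    if "c1 \<in> C" "c2 \<in> C" "norm v1 \<le> \<delta> / 3" "norm v2 \<le> \<delta> / 3" "c1 + v1 + ?d *\<^sub>R g = c2 + v2"
      "g \<in> L" "g \<noteq> 0" for c1 c2 v1 v2 g
  proof (rule ccontr)
    assume "g \<notin> diameter_directions L C"
    then have "\<delta> \<le> dist (c2 - c1) (?d *\<^sub>R g)"
      using \<delta>(2) that by blast
    also have "\<dots> = norm (v1 - v2)"
    proof -
      have "c2 - c1 - ?d *\<^sub>R g = (c2 + v2) - (c1 + v1 + ?d *\<^sub>R g) + (v1 - v2)"
        by (simp add: algebra_simps)
      then show ?thesis
        using that(5) by (simp add: dist_norm)
    qed
    also have "\<dots> \<le> 2 * \<delta> / 3"
      using that(3,4) norm_triangle_ineq4[of v1 v2] by simp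
    finally show False
      using \<delta>(1) by simp
  qed
  then show ?thesis
    using that[of "\<delta> / 3"] \<delta>(1) by fastforce
qed

lemma lattice_diam_slabs_near_body_le:
  assumes L: "is_lattice L" and C: "convex_body C"
    and sep: "\<And>w. w \<in> diameter_directions L C \<Longrightarrow> diameter_separator L C w (u w) (h w)"
  obtains \<epsilon> where "\<epsilon> > 0"
    "lattice_diam L ((\<Inter>w\<in>diameter_directions L C. diameter_slab L C w (u w) (h w))
       \<inter> (\<Union>c\<in>C. \<Union>v\<in>cball 0 \<epsilon>. {c + v})) \<le> lattice_diam L C"
proof -
  define d where "d = lattice_diam L C"
  define W where "W = diameter_directions L C"
  obtain \<epsilon> where \<epsilon>: "\<epsilon> > 0"
    "\<And>a g. a \<in> (\<Union>c\<in>C. \<Union>v\<in>cball 0 \<epsilon>. {c + v}) \<Longrightarrow> a + d *\<^sub>R g \<in> (\<Union>c\<in>C. \<Union>v\<in>cball 0 \<epsilon>. {c + v}) \<Longrightarrow>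
      g \<in> L \<Longrightarrow> g \<noteq> 0 \<Longrightarrow> g \<in> W"
    using non_diameter_chords_avoid_neighbourhood[OF L C] unfolding d_def W_def by metis
  define Q where "Q = (\<Inter>w\<in>W. diameter_slab L C w (u w) (h w)) \<inter> (\<Union>c\<in>C. \<Union>v\<in>cball 0 \<epsilon>. {c + v})"
  have d: "d > 0"
    unfolding d_def using lattice_diam_pos[OF L C] .
  have cv: "convex C" and Cne: "C \<noteq> {}"
    using C interior_subset by (auto simp: convex_body_def)
  have cvQ: "convex Q"
    unfolding Q_def diameter_slab_def
    by (intro convex_Int convex_INT convex_slab convex_sums cv convex_cball)
  have "c + 0 \<in> (\<Union>c\<in>C. \<Union>v\<in>cball 0 \<epsilon>. {c + v})" if "c \<in> C" for c
    using that \<epsilon>(1) by force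
  then have "C \<subseteq> Q"
    using sep by (auto simp: Q_def W_def diameter_separator_def)
  have chord: "t \<le> d" if t: "a \<in> Q" "a + t *\<^sub>R g \<in> Q" "g \<in> L" "g \<noteq> 0" "t > 0" for a t g
  proof (cases "g \<in> W")
    case True
    then have "a \<in> slab (u g) (h g - d * (u g \<bullet> g)) (h g)"
      "a + t *\<^sub>R g \<in> slab (u g) (h g - d * (u g \<bullet> g)) (h g)"
      using t(1,2) unfolding Q_def diameter_slab_def d_def by auto
    moreover have "0 < u g \<bullet> g"
      using True diameter_separator_inner_pos[OF L C sep] unfolding W_def by blast
    ultimately show ?thesis
      by (rule slab_chord_le)
  next
    case False
    show ?thesis
    proof (rule ccontr)
      assume "\<not> t \<le> d"
      then have "a + d *\<^sub>R g = (1 - d / t) *\<^sub>R a + (d / t) *\<^sub>R (a + t *\<^sub>R g)" "0 \<le> d / t" "d / t \<le> 1"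
        using t(5) d by (auto simp: algebra_simps)
      then have "a + d *\<^sub>R g \<in> Q"
        using convexD[OF cvQ t(1,2)] by simp
      then show False
        using \<epsilon>(2) t False unfolding Q_def by blast
    qed
  qed
  have "lattice_diam L Q \<le> d"
    using \<open>C \<subseteq> Q\<close> Cne d chord by (intro lattice_diam_le[OF L]) auto
  then show ?thesis
    using that[of \<epsilon>] \<epsilon>(1) unfolding Q_def W_def d_def by simp
qed

lemma lattice_complete_eq_Inter_slabs:
  assumes L: "is_lattice L" and C: "convex_body C" and comp: "lattice_complete L C"
    and sep: "\<And>w. w \<in> diameter_directions L C \<Longrightarrow> diameter_separator L C w (u w) (h w)"
  shows "C = (\<Inter>w\<in>diameter_directions L C. diameter_slab L C w (u w) (h w))"
proof -
  define P where "P = (\<Inter>w\<in>diameter_directions L C. diameter_slab L C w (u w) (h w))"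
  obtain \<epsilon> where \<epsilon>: "\<epsilon> > 0" "lattice_diam L (P \<inter> (\<Union>c\<in>C. \<Union>v\<in>cball 0 \<epsilon>. {c + v})) \<le> lattice_diam L C"
    using lattice_diam_slabs_near_body_le[OF L C sep] unfolding P_def by blast
  define N where "N = (\<Union>c\<in>C. \<Union>v\<in>cball 0 \<epsilon>. {c + v})"
  define U where "U = (\<Union>c\<in>C. \<Union>v\<in>ball 0 \<epsilon>. {c + v})"
  have cC: "compact C" and cv: "convex C" and iC: "interior C \<noteq> {}"
    using C by (auto simp: convex_body_def)
  have CP: "C \<subseteq> P"
    using sep by (auto simp: P_def diameter_separator_def)
  have clP: "closed P" and cvP: "convex P"
    unfolding P_def diameter_slab_def by (auto intro!: closed_INT convex_INT closed_slab convex_slab)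
  have CU: "C \<subseteq> U" and UN: "U \<subseteq> N"
    unfolding U_def N_def using \<epsilon>(1) by force+
  have cPN: "compact (P \<inter> N)"
    unfolding N_def using clP cC by (intro closed_Int_compact compact_sums' compact_cball)
  have "interior C \<subseteq> interior (P \<inter> N)"
    using CP CU UN by (intro interior_mono) auto
  then have "convex_body (P \<inter> N)"
    unfolding convex_body_def N_def using cPN cvP cv iC
    by (auto intro!: convex_Int convex_sums simp: N_def)
  moreover have "lattice_diam L C \<le> lattice_diam L (P \<inter> N)"
    using CP CU UN iC interior_subset cPN
    by (intro lattice_diam_mono[OF L]) (auto intro: compact_imp_bounded)
  then have "lattice_diam L (P \<inter> N) = lattice_diam L C"
    using \<epsilon>(2)[folded N_def] by simp
  moreover have "C \<subseteq> P \<inter> N"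
    using CP CU UN by blast
  ultimately have "P \<inter> N = C"
    using comp \<open>convex_body (P \<inter> N)\<close> unfolding lattice_complete_def by blast
  then have "C = P \<inter> U"
    using CP CU UN by blast
  moreover have "open U"
    unfolding U_def by (intro open_sums) simp
  ultimately have "openin (top_of_set P) C"
    using openin_open_Int by blast
  moreover have "closedin (top_of_set P) C"
    using CP cC by (simp add: closed_subset compact_imp_closed)
  moreover have "C \<noteq> {}"
    using iC interior_subset by blast
  ultimately have "C = P"
    using convex_connected[OF cvP] unfolding connected_clopen by blast
  then show ?thesis
    unfolding P_def .
qed

lemma diameter_separators_exist:
  assumes L: "is_lattice L" and C: "convex_body C"
  obtains u h where
    "\<And>w. w \<in> diameter_directions L C \<Longrightarrow> diameter_separator L C w (u w) (h w)"
proof -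
  have "\<forall>w\<in>diameter_directions L C. \<exists>p. diameter_separator L C w (fst p) (snd p)"
    using diameter_separator_exists[OF L C] by (metis fst_conv snd_conv)
  then obtain p where "\<And>w. w \<in> diameter_directions L C \<Longrightarrow>
      diameter_separator L C w (fst (p w)) (snd (p w))"
    by metis
  then show ?thesis
    using that[of "\<lambda>w. fst (p w)" "\<lambda>w. snd (p w)"] by blast
qed

lemma lattice_complete_imp_polytope:
  assumes L: "is_lattice L" and C: "convex_body C" and comp: "lattice_complete L C"
  shows "polytope C"
proof -
  obtain u h where "\<And>w. w \<in> diameter_directions L C \<Longrightarrow> diameter_separator L C w (u w) (h w)"
    using diameter_separators_exist[OF L C] by blast
  then have C_eq: "C = (\<Inter>w\<in>diameter_directions L C. diameter_slab L C w (u w) (h w))"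
    by (rule lattice_complete_eq_Inter_slabs[OF L C comp])
  have "polyhedron (\<Inter>w\<in>diameter_directions L C. diameter_slab L C w (u w) (h w))"
    using finite_diameter_directions[OF L C]
    by (intro polyhedron_Inter) (auto simp: diameter_slab_def polyhedron_slab)
  then show ?thesis
    using C C_eq by (simp add: polytope_eq_bounded_polyhedron convex_body_def compact_imp_bounded)
qed

section \<open>Facets of lattice complete bodies\<close>

lemma facet_of_maximal_face:
  fixes C :: "'a::euclidean_space set"
  assumes cv: "convex C" and F: "F facet_of C" and G: "G face_of C" "F \<subseteq> G" "G \<noteq> C"
  shows "G = F"
proof (rule ccontr)
  assume "G \<noteq> F"
  have "F face_of C" and F_dim: "aff_dim F = aff_dim C - 1"
    using F by (auto simp: facet_of_def)
  then have "F face_of G"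
    using face_of_subset G face_of_imp_subset by blast
  then have "aff_dim F < aff_dim G"
    using face_of_aff_dim_lt[OF face_of_imp_convex[OF G(1)]] \<open>G \<noteq> F\<close> by metis
  moreover have "aff_dim G < aff_dim C"
    using face_of_aff_dim_lt[OF cv G(1,3)] .
  ultimately show False
    using F_dim by simp
qed

lemma facet_eq_supporting_face:
  fixes C :: "'a::euclidean_space set"
  assumes cv: "convex C" and iC: "interior C \<noteq> {}" and "u \<noteq> 0" and sup: "\<forall>y\<in>C. u \<bullet> y \<le> c"
    and F: "F facet_of C" and x: "x \<in> rel_interior F" "u \<bullet> x = c"
  shows "F = C \<inter> {y. u \<bullet> y = c}"
proof -
  have G: "C \<inter> {y. u \<bullet> y = c} face_of C"
    using face_of_Int_supporting_hyperplane_le[OF cv] sup by blast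
  have FC: "F \<subseteq> C"
    using F face_of_imp_subset by (auto simp: facet_of_def)
  then have "x \<in> C \<inter> {y. u \<bullet> y = c}"
    using x rel_interior_subset by blast
  then have "F \<subseteq> C \<inter> {y. u \<bullet> y = c}"
    using subset_of_face_of[OF G FC] x(1) by blast
  moreover have "C \<inter> {y. u \<bullet> y = c} \<noteq> C"
    using interior_nonempty_not_subset_hyperplane[OF iC \<open>u \<noteq> 0\<close>] by blast
  ultimately show ?thesis
    using facet_of_maximal_face[OF cv F G] by simp
qed

lemma facet_eq_slab_face:
  fixes C :: "'a::euclidean_space set"
  assumes cv: "convex C" and iC: "interior C \<noteq> {}" and "u \<noteq> 0" and "C \<subseteq> slab u lo hi"
    and F: "F facet_of C" and x: "x \<in> rel_interior F" "u \<bullet> x = lo \<or> u \<bullet> x = hi"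
  shows "F = C \<inter> {y. u \<bullet> y = u \<bullet> x}"
  using x(2)
proof
  assume "u \<bullet> x = lo"
  then have "F = C \<inter> {y. (- u) \<bullet> y = - lo}"
    using assms by (intro facet_eq_supporting_face) (auto simp: slab_def)
  then show ?thesis
    using \<open>u \<bullet> x = lo\<close> by auto
next
  assume "u \<bullet> x = hi"
  then show ?thesis
    using assms by (intro facet_eq_supporting_face) (auto simp: slab_def)
qed

lemma affine_hull_facet_eq_hyperplane:
  fixes C :: "'a::euclidean_space set"
  assumes iC: "interior C \<noteq> {}" and F: "F facet_of C" and "u \<noteq> 0"
    and FH: "F \<subseteq> {y. u \<bullet> y = c}"
  shows "affine hull F = {y. u \<bullet> y = c}"
proof (rule affine_dim_equal)
  show "affine hull F \<noteq> {}"
    using F by (simp add: facet_of_def)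
  show "affine hull F \<subseteq> {y. u \<bullet> y = c}"
    using FH by (intro hull_minimal affine_hyperplane)
  have "aff_dim F = aff_dim C - 1"
    using F by (simp add: facet_of_def)
  also have "\<dots> = int DIM('a) - 1"
    using aff_dim_nonempty_interior[OF iC] by simp
  finally show "aff_dim (affine hull F) = aff_dim {y. u \<bullet> y = c}"
    using \<open>u \<noteq> 0\<close> by simp
qed (auto intro: affine_hyperplane)

lemma facet_rel_interior_nonempty:
  fixes C :: "'a::euclidean_space set"
  assumes "F facet_of C"
  shows "rel_interior F \<noteq> {}"
  using assms face_of_imp_convex rel_interior_eq_empty by (auto simp: facet_of_def)

lemma facet_rel_interior_not_interior:
  fixes C :: "'a::euclidean_space set"
  assumes "F facet_of C" "x \<in> rel_interior F"
  shows "x \<in> C" "x \<notin> interior C"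
proof -
  have "F face_of C" "F \<noteq> C"
    using assms(1) by (auto simp: facet_of_def)
  moreover have "x \<in> F"
    using assms(2) rel_interior_subset by blast
  ultimately show "x \<in> C" "x \<notin> interior C"
    using face_of_disjoint_interior[of F C] face_of_imp_subset[of F C] by blast+
qed

lemma Inter_slabs_frontier:
  fixes C :: "'a::euclidean_space set"
  assumes "finite W" and C: "C = (\<Inter>w\<in>W. slab (u w) (lo w) (hi w))"
    and x: "x \<in> C" "x \<notin> interior C"
  shows "\<exists>w\<in>W. u w \<bullet> x = lo w \<or> u w \<bullet> x = hi w"
proof (rule ccontr)
  assume none: "\<not> ?thesis"
  define U where "U = (\<Inter>w\<in>W. {y. lo w < u w \<bullet> y} \<inter> {y. u w \<bullet> y < hi w})"
  have "open U"
    unfolding U_def using \<open>finite W\<close>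
    by (intro open_INT ballI open_Int open_halfspace_lt open_halfspace_gt)
  moreover have "x \<in> U"
    using x(1) none unfolding C U_def slab_def by force
  moreover have "U \<subseteq> C"
    unfolding C U_def slab_def by (auto intro: less_imp_le)
  ultimately show False
    using x(2) interiorI by blast
qed

lemma lattice_complete_frontier_on_separator:
  assumes L: "is_lattice L" and C: "convex_body C" and comp: "lattice_complete L C"
    and sep: "\<And>w. w \<in> diameter_directions L C \<Longrightarrow> diameter_separator L C w (u w) (h w)"
    and x: "x \<in> C" "x \<notin> interior C"
  obtains w where "w \<in> diameter_directions L C"
    "u w \<bullet> x = h w - lattice_diam L C * (u w \<bullet> w) \<or> u w \<bullet> x = h w"
proof -
  have "C = (\<Inter>w\<in>diameter_directions L C.
      slab (u w) (h w - lattice_diam L C * (u w \<bullet> w)) (h w))"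
    using lattice_complete_eq_Inter_slabs[OF L C comp sep] unfolding diameter_slab_def .
  from Inter_slabs_frontier[OF finite_diameter_directions[OF L C] this x] that
  show ?thesis
    by blast
qed

lemma inner_eq_0_if_bounded_on_line:
  assumes "\<And>s. a \<bullet> (y + s *\<^sub>R u) \<le> b"
  shows "a \<bullet> u = 0"
proof (rule ccontr)
  assume "a \<bullet> u \<noteq> 0"
  then have "a \<bullet> (y + ((b - a \<bullet> y + 1) / (a \<bullet> u)) *\<^sub>R u) = b + 1"
    by (simp add: inner_add_right)
  then show False
    using assms[of "(b - a \<bullet> y + 1) / (a \<bullet> u)"] by simp
qed

lemma separating_hyperplane_within_hyperplane:
  fixes F Z :: "'a::euclidean_space set"
  assumes "u0 \<noteq> 0" and FH: "F \<subseteq> {y. u0 \<bullet> y = h0}" and ZH: "Z \<subseteq> {y. u0 \<bullet> y = h0}"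
    and F: "convex F" "closed F" "F \<noteq> {}" and Z: "convex Z" "Z \<noteq> {}"
    and disj: "rel_interior F \<inter> Z = {}"
  obtains a b where "a \<noteq> 0" "a \<bullet> u0 = 0" "\<forall>y\<in>F. a \<bullet> y \<le> b" "\<forall>z\<in>Z. b \<le> a \<bullet> z"
proof -
  define R where "R = rel_interior F"
  define S1 where "S1 = (\<Union>y\<in>R. \<Union>v\<in>span {u0}. {y + v})"
  define S2 where "S2 = (\<Union>z\<in>Z. \<Union>v\<in>span {u0}. {z + v})"
  have "R \<noteq> {}"
    unfolding R_def using F rel_interior_eq_empty by blast
  have cv_span: "convex (span {u0})"
    by (simp add: subspace_imp_convex)
  have "convex S1" "convex S2"
    unfolding S1_def S2_def R_def
    using convex_sums[OF convex_rel_interior[OF F(1)] cv_span] convex_sums[OF Z(1) cv_span] .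
  moreover have "S1 \<noteq> {}" "S2 \<noteq> {}"
    unfolding S1_def S2_def using \<open>R \<noteq> {}\<close> Z span_zero by blast+
  moreover have "S1 \<inter> S2 = {}"
  proof (rule ccontr)
    assume "S1 \<inter> S2 \<noteq> {}"
    then obtain y z s s' where yz: "y \<in> R" "z \<in> Z" "y + s *\<^sub>R u0 = z + s' *\<^sub>R u0"
      unfolding S1_def S2_def by (auto simp: span_singleton)
    have "u0 \<bullet> y = h0" "u0 \<bullet> z = h0"
      using yz FH ZH rel_interior_subset unfolding R_def by blast+
    then have "s * (u0 \<bullet> u0) = s' * (u0 \<bullet> u0)"
      using arg_cong[OF yz(3), of "inner u0"] by (simp add: inner_add_right)
    then have "y = z"
      using yz(3) \<open>u0 \<noteq> 0\<close> by simp
    then show False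
      using disj yz unfolding R_def by blast
  qed
  ultimately obtain a b where ab: "a \<noteq> 0" "\<forall>x\<in>S1. a \<bullet> x \<le> b" "\<forall>x\<in>S2. b \<le> a \<bullet> x"
    using separating_hyperplane_sets by metis
  obtain y0 where y0: "y0 \<in> R"
    using \<open>R \<noteq> {}\<close> by blast
  have "y0 + s *\<^sub>R u0 \<in> S1" for s
    unfolding S1_def using y0 by (auto simp: span_singleton)
  then have "a \<bullet> u0 = 0"
    using ab(2) by (intro inner_eq_0_if_bounded_on_line[of a y0 u0 b]) blast
  have "R \<subseteq> {y. a \<bullet> y \<le> b}"
    using ab(2) span_zero unfolding S1_def by fastforce
  then have "closure R \<subseteq> {y. a \<bullet> y \<le> b}"
    by (intro closure_minimal closed_halfspace_le)
  moreover have "closure R = F"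
    unfolding R_def using convex_closure_rel_interior[OF F(1)] F(2) by simp
  moreover have "\<forall>z\<in>Z. b \<le> a \<bullet> z"
    using ab(3) span_zero unfolding S2_def by fastforce
  ultimately show ?thesis
    using that ab(1) \<open>a \<bullet> u0 = 0\<close> by blast
qed

lemma tilt_separating_hyperplane:
  fixes V V' :: "'a::euclidean_space set"
  assumes "finite V" "finite V'"
    and V: "\<And>v. v \<in> V \<Longrightarrow> u0 \<bullet> v < h0 \<or> (u0 \<bullet> v = h0 \<and> a \<bullet> v \<le> b)"
    and V': "\<And>v. v \<in> V' \<Longrightarrow> h0 < u0 \<bullet> v \<or> (u0 \<bullet> v = h0 \<and> b \<le> a \<bullet> v)"
  obtains \<eta> where "\<eta> > 0" "\<forall>y\<in>convex hull V. (u0 + \<eta> *\<^sub>R a) \<bullet> y \<le> h0 + \<eta> * b"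
    "\<forall>y\<in>convex hull V'. h0 + \<eta> * b \<le> (u0 + \<eta> *\<^sub>R a) \<bullet> y"
proof -
  have lim: "((\<lambda>\<eta>. (u0 + \<eta> *\<^sub>R a) \<bullet> v - (h0 + \<eta> * b)) \<longlongrightarrow> u0 \<bullet> v - h0) (at_right 0)" for v
    by (auto simp: inner_add_left intro!: tendsto_eq_intros)
  have pos: "\<forall>\<^sub>F \<eta> in at_right 0. (0::real) < \<eta>"
    by (rule eventually_at_right_less)
  have "\<forall>\<^sub>F \<eta> in at_right 0. (u0 + \<eta> *\<^sub>R a) \<bullet> v \<le> h0 + \<eta> * b" if "v \<in> V" for v
    using V[OF that]
  proof
    assume "u0 \<bullet> v < h0"
    then show ?thesis
      using order_tendstoD(2)[OF lim[of v], of 0] by (auto elim: eventually_mono)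
  next
    assume "u0 \<bullet> v = h0 \<and> a \<bullet> v \<le> b"
    then show ?thesis
      using pos by (auto elim!: eventually_mono simp: inner_add_left)
  qed
  moreover have "\<forall>\<^sub>F \<eta> in at_right 0. h0 + \<eta> * b \<le> (u0 + \<eta> *\<^sub>R a) \<bullet> v" if "v \<in> V'" for v
    using V'[OF that]
  proof
    assume "h0 < u0 \<bullet> v"
    then show ?thesis
      using order_tendstoD(1)[OF lim[of v], of 0] by (auto elim: eventually_mono)
  next
    assume "u0 \<bullet> v = h0 \<and> b \<le> a \<bullet> v"
    then show ?thesis
      using pos by (auto elim!: eventually_mono simp: inner_add_left)
  qed
  ultimately have "\<forall>\<^sub>F \<eta> in at_right 0. 0 < \<eta> \<and> (\<forall>v\<in>V. (u0 + \<eta> *\<^sub>R a) \<bullet> v \<le> h0 + \<eta> * b)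
      \<and> (\<forall>v\<in>V'. h0 + \<eta> * b \<le> (u0 + \<eta> *\<^sub>R a) \<bullet> v)"
    using pos assms(1,2) by (intro eventually_conj eventually_ball_finite) auto
  then obtain \<eta> where \<eta>: "0 < \<eta>" "\<forall>v\<in>V. (u0 + \<eta> *\<^sub>R a) \<bullet> v \<le> h0 + \<eta> * b"
    "\<forall>v\<in>V'. h0 + \<eta> * b \<le> (u0 + \<eta> *\<^sub>R a) \<bullet> v"
    using eventually_happens'[OF trivial_limit_at_right_real] by blast
  have "convex hull V \<subseteq> {y. (u0 + \<eta> *\<^sub>R a) \<bullet> y \<le> h0 + \<eta> * b}"
    using \<eta>(2) by (intro hull_minimal convex_halfspace_le) auto
  moreover have "convex hull V' \<subseteq> {y. h0 + \<eta> * b \<le> (u0 + \<eta> *\<^sub>R a) \<bullet> y}"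
    using \<eta>(3) convex_halfspace_ge[of "h0 + \<eta> * b" "u0 + \<eta> *\<^sub>R a"]
    by (intro hull_minimal) (auto simp: inner_commute)
  ultimately show ?thesis
    using that \<eta>(1) by blast
qed

lemma facet_not_in_tilted_hyperplane:
  fixes C :: "'a::euclidean_space set"
  assumes iC: "interior C \<noteq> {}" and F: "F facet_of C" and "u0 \<noteq> 0"
    and FH: "F \<subseteq> {y. u0 \<bullet> y = h0}" and a: "a \<noteq> 0" "a \<bullet> u0 = 0" and "\<eta> \<noteq> 0"
  shows "\<not> F \<subseteq> {y. (u0 + \<eta> *\<^sub>R a) \<bullet> y = c}"
proof
  assume Fc: "F \<subseteq> {y. (u0 + \<eta> *\<^sub>R a) \<bullet> y = c}"
  obtain y0 where y0: "y0 \<in> F"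
    using F by (auto simp: facet_of_def)
  have "y0 + a \<in> affine hull F"
    using y0 FH a(2) affine_hull_facet_eq_hyperplane[OF iC F \<open>u0 \<noteq> 0\<close> FH]
    by (auto simp: inner_add_right inner_commute)
  moreover have "affine hull F \<subseteq> {y. (u0 + \<eta> *\<^sub>R a) \<bullet> y = c}"
    using Fc by (intro hull_minimal affine_hyperplane)
  ultimately have "(u0 + \<eta> *\<^sub>R a) \<bullet> (y0 + a) = c" "(u0 + \<eta> *\<^sub>R a) \<bullet> y0 = c"
    using y0 Fc by blast+
  then have "(u0 + \<eta> *\<^sub>R a) \<bullet> a = 0"
    by (simp add: inner_add_right)
  then have "\<eta> * (a \<bullet> a) = 0"
    using a(2) by (simp add: inner_add_left inner_commute[of u0 a])
  then show False
    using a(1) \<open>\<eta> \<noteq> 0\<close> by simp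
qed

lemma polytopes_separation_avoiding_facet:
  fixes C A :: "'a::euclidean_space set"
  assumes C: "polytope C" "interior C \<noteq> {}" and A: "polytope A"
    and u0: "u0 \<noteq> 0" "\<forall>y\<in>C. u0 \<bullet> y \<le> h0" "\<forall>y\<in>A. h0 \<le> u0 \<bullet> y"
    and F: "F facet_of C" "F \<subseteq> {y. u0 \<bullet> y = h0}"
    and touch: "A \<inter> {y. u0 \<bullet> y = h0} \<noteq> {}" and disj: "rel_interior F \<inter> A = {}"
  obtains u h where "u \<noteq> 0" "\<forall>y\<in>C. u \<bullet> y \<le> h" "\<forall>y\<in>A. h \<le> u \<bullet> y"
    "\<And>c. \<not> F \<subseteq> {y. u \<bullet> y = c}"
proof -
  define Z where "Z = A \<inter> {y. u0 \<bullet> y = h0}"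
  obtain V V' where V: "finite V" "C = convex hull V" "finite V'" "A = convex hull V'"
    using C(1) A by (auto simp: polytope_def)
  have cv: "convex C" and clC: "closed C"
    using C(1) by (auto intro: polytope_imp_convex polytope_imp_closed)
  obtain x where x: "x \<in> rel_interior F"
    using facet_rel_interior_nonempty[OF F(1)] by blast
  then have "u0 \<bullet> x = h0"
    using F(2) rel_interior_subset by blast
  then have F_eq: "F = C \<inter> {y. u0 \<bullet> y = h0}"
    using facet_eq_supporting_face[OF cv C(2) u0(1,2) F(1) x] by blast
  have "convex Z"
    unfolding Z_def using polytope_imp_convex[OF A] by (intro convex_Int convex_hyperplane)
  moreover have "convex F" "closed F" "F \<noteq> {}"
    using F(1) face_of_imp_convex face_of_imp_closed[OF cv clC] by (auto simp: facet_of_def)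
  moreover have "rel_interior F \<inter> Z = {}"
    using disj unfolding Z_def by blast
  ultimately obtain a b where ab: "a \<noteq> 0" "a \<bullet> u0 = 0" "\<forall>y\<in>F. a \<bullet> y \<le> b" "\<forall>z\<in>Z. b \<le> a \<bullet> z"
    using separating_hyperplane_within_hyperplane[OF u0(1) F(2), of Z] touch unfolding Z_def by blast
  obtain \<eta> where \<eta>: "\<eta> > 0" "\<forall>y\<in>C. (u0 + \<eta> *\<^sub>R a) \<bullet> y \<le> h0 + \<eta> * b"
    "\<forall>y\<in>A. h0 + \<eta> * b \<le> (u0 + \<eta> *\<^sub>R a) \<bullet> y"
  proof (rule tilt_separating_hyperplane[OF V(1,3)])
    fix v assume "v \<in> V"
    then have "v \<in> C"
      by (simp add: V(2) hull_inc)
    then show "u0 \<bullet> v < h0 \<or> (u0 \<bullet> v = h0 \<and> a \<bullet> v \<le> b)"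
      using u0(2) ab(3) F_eq by force
  next
    fix v assume "v \<in> V'"
    then have "v \<in> A"
      by (simp add: V(4) hull_inc)
    then show "h0 < u0 \<bullet> v \<or> (u0 \<bullet> v = h0 \<and> b \<le> a \<bullet> v)"
      using u0(3) ab(4) unfolding Z_def by force
  qed (use V that in blast)
  have avoid: "\<not> F \<subseteq> {y. (u0 + \<eta> *\<^sub>R a) \<bullet> y = c}" for c
    using facet_not_in_tilted_hyperplane[OF C(2) F(1) u0(1) F(2) ab(1,2)] \<eta>(1) by simp
  have "u0 + \<eta> *\<^sub>R a \<noteq> 0"
  proof
    assume "u0 + \<eta> *\<^sub>R a = 0"
    then have "F \<subseteq> {y. (u0 + \<eta> *\<^sub>R a) \<bullet> y = 0}"
      by simp
    then show False
      using avoid by blast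
  qed
  then show ?thesis
    using that \<eta>(2,3) avoid by blast
qed

lemma tilted_separator_avoiding_facet:
  assumes L: "is_lattice L" and C: "convex_body C" and "polytope C"
    and w: "w \<in> diameter_directions L C" and sep: "diameter_separator L C w u0 h0"
    and F: "F facet_of C" "F \<subseteq> {y. u0 \<bullet> y = h0}"
    and no_contact: "rel_interior F \<inter> (+) (lattice_diam L C *\<^sub>R w) ` C = {}"
  obtains u h where "diameter_separator L C w u h" "\<And>c. \<not> F \<subseteq> {y. u \<bullet> y = c}"
proof -
  define d where "d = lattice_diam L C"
  define A where "A = (+) (d *\<^sub>R w) ` C"
  have translate: "y \<in> C \<longleftrightarrow> y + d *\<^sub>R w \<in> A" for y
    unfolding A_def by (auto simp: add.commute)
  have u0: "u0 \<noteq> 0" "\<forall>y\<in>C. u0 \<bullet> y \<le> h0" "\<forall>y\<in>A. h0 \<le> u0 \<bullet> y"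
    using sep unfolding diameter_separator_iff A_def d_def by (auto simp: add.commute)
  obtain a0 where "a0 \<in> C" "a0 + d *\<^sub>R w \<in> C"
    using w C diameter_directions_iff unfolding d_def convex_body_def by blast
  then have "a0 + d *\<^sub>R w \<in> A \<inter> {y. u0 \<bullet> y = h0}"
    using u0 translate by force
  moreover have "polytope A" "interior C \<noteq> {}"
    using \<open>polytope C\<close> C unfolding A_def by (auto simp: polytope_translation_eq convex_body_def)
  ultimately obtain u h where "u \<noteq> 0" "\<forall>y\<in>C. u \<bullet> y \<le> h" "\<forall>y\<in>A. h \<le> u \<bullet> y"
    and avoid: "\<And>c. \<not> F \<subseteq> {y. u \<bullet> y = c}"
    using polytopes_separation_avoiding_facet[OF \<open>polytope C\<close> _ _ u0 F] no_contact
    unfolding A_def d_def by blast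
  then have "diameter_separator L C w u h"
    unfolding diameter_separator_iff d_def[symmetric] using translate by blast
  then show ?thesis
    using that avoid by blast
qed

lemma uminus_diameter_direction:
  assumes L: "is_lattice L" and "convex C" and w: "w \<in> diameter_directions L C"
  shows "- w \<in> diameter_directions L C"
proof -
  obtain a where "a \<in> C" "a + lattice_diam L C *\<^sub>R w \<in> C" "w \<in> L" "w \<noteq> 0"
    using w diameter_directions_iff[OF \<open>convex C\<close>] by blast
  moreover have "- w \<in> L"
    using \<open>w \<in> L\<close> L is_lattice_imp_discrete_subgroup add_subgroup_uminus
    by (auto simp: discrete_subgroup_def)
  ultimately show ?thesis
    using diameter_directions_iff[OF \<open>convex C\<close>] by force
qed

lemma facet_avoiding_separator:
  assumes L: "is_lattice L" and C: "convex_body C" and comp: "lattice_complete L C"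
    and F: "F facet_of C" and w: "w \<in> diameter_directions L C"
    and no_contact: "\<And>x g. x \<in> rel_interior F \<Longrightarrow> g \<in> L \<Longrightarrow> g \<noteq> 0 \<Longrightarrow>
      x - lattice_diam L C *\<^sub>R g \<notin> C"
  obtains u h where "diameter_separator L C w u h" "\<not> F \<subseteq> {y. u \<bullet> y = h}"
    "\<not> F \<subseteq> {y. u \<bullet> y = h - lattice_diam L C * (u \<bullet> w)}"
proof -
  let ?d = "lattice_diam L C"
  have P: "polytope C"
    using lattice_complete_imp_polytope[OF L C comp] .
  have cv: "convex C"
    using C by (simp add: convex_body_def)
  have contact_free: "rel_interior F \<inter> (+) (?d *\<^sub>R v) ` C = {}" if "v \<in> L" "v \<noteq> 0" for v
    using no_contact[OF _ that] by force
  have wL: "w \<in> L" "w \<noteq> 0" "- w \<in> diameter_directions L C"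
    using w diameter_directions_iff[OF cv] uminus_diameter_direction[OF L cv] by auto
  then have "- w \<in> L" "- w \<noteq> 0"
    using diameter_directions_iff[OF cv] by auto
  obtain u0 h0 where sep0: "diameter_separator L C w u0 h0"
    using diameter_separator_exists[OF L C w] by blast
  consider (upper) "F \<subseteq> {y. u0 \<bullet> y = h0}" | (lower) "F \<subseteq> {y. u0 \<bullet> y = h0 - ?d * (u0 \<bullet> w)}"
    | (neither) "\<not> F \<subseteq> {y. u0 \<bullet> y = h0}" "\<not> F \<subseteq> {y. u0 \<bullet> y = h0 - ?d * (u0 \<bullet> w)}"
    by blast
  then show ?thesis
  proof cases
    case upper
    obtain u h where sep: "diameter_separator L C w u h"
      and avoid: "\<And>c. \<not> F \<subseteq> {y. u \<bullet> y = c}"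
      using tilted_separator_avoiding_facet[OF L C P w sep0 F upper contact_free[OF wL(1,2)]]
      by blast
    show ?thesis
      using that[OF sep avoid avoid] .
  next
    case lower
    \<comment> \<open>The lower face of the slab is the upper face of the reflected separator for \<open>- w\<close>.\<close>
    have "F \<subseteq> {y. (- u0) \<bullet> y = ?d * (u0 \<bullet> w) - h0}"
      using lower by auto
    then obtain u h where sep: "diameter_separator L C (- w) u h"
      and avoid: "\<And>c. \<not> F \<subseteq> {y. u \<bullet> y = c}"
      using tilted_separator_avoiding_facet[OF L C P wL(3) diameter_separator_uminus[OF sep0] F(1)]
        contact_free[OF \<open>- w \<in> L\<close> \<open>- w \<noteq> 0\<close>] by blast
    have sep': "diameter_separator L C w (- u) (?d * (u \<bullet> - w) - h)"
      using diameter_separator_uminus[OF sep] by simp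
    have avoid': "\<not> F \<subseteq> {y. (- u) \<bullet> y = c}" for c
      using avoid[of "- c"] by auto
    show ?thesis
      using that[OF sep' avoid' avoid'] .
  next
    case neither
    then show ?thesis
      using that[OF sep0] by blast
  qed
qed

lemma facet_rel_interior_contact:
  assumes L: "is_lattice L" and C: "convex_body C" and comp: "lattice_complete L C"
    and F: "F facet_of C"
  obtains x g where "x \<in> rel_interior F" "g \<in> L" "g \<noteq> 0" "x - lattice_diam L C *\<^sub>R g \<in> C"
proof (rule ccontr)
  let ?d = "lattice_diam L C"
  assume "\<not> thesis"
  then have no_contact: "\<And>x g. x \<in> rel_interior F \<Longrightarrow> g \<in> L \<Longrightarrow> g \<noteq> 0 \<Longrightarrow> x - ?d *\<^sub>R g \<notin> C"
    using that by blast
  have "\<forall>w\<in>diameter_directions L C. \<exists>p. diameter_separator L C w (fst p) (snd p)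
      \<and> \<not> F \<subseteq> {y. fst p \<bullet> y = snd p} \<and> \<not> F \<subseteq> {y. fst p \<bullet> y = snd p - ?d * (fst p \<bullet> w)}"
  proof
    fix w assume "w \<in> diameter_directions L C"
    then obtain u h where "diameter_separator L C w u h" "\<not> F \<subseteq> {y. u \<bullet> y = h}"
      "\<not> F \<subseteq> {y. u \<bullet> y = h - ?d * (u \<bullet> w)}"
      using facet_avoiding_separator[OF L C comp F _ no_contact] by blast
    then show "\<exists>p. diameter_separator L C w (fst p) (snd p) \<and> \<not> F \<subseteq> {y. fst p \<bullet> y = snd p}
        \<and> \<not> F \<subseteq> {y. fst p \<bullet> y = snd p - ?d * (fst p \<bullet> w)}"
      by (intro exI[of _ "(u, h)"]) simp
  qed
  then obtain p where p: "\<And>w. w \<in> diameter_directions L C \<Longrightarrow>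
      diameter_separator L C w (fst (p w)) (snd (p w)) \<and> \<not> F \<subseteq> {y. fst (p w) \<bullet> y = snd (p w)}
      \<and> \<not> F \<subseteq> {y. fst (p w) \<bullet> y = snd (p w) - ?d * (fst (p w) \<bullet> w)}"
    by metis
  obtain x where x: "x \<in> rel_interior F"
    using facet_rel_interior_nonempty[OF F] by blast
  obtain w where w: "w \<in> diameter_directions L C"
    "fst (p w) \<bullet> x = snd (p w) - ?d * (fst (p w) \<bullet> w) \<or> fst (p w) \<bullet> x = snd (p w)"
    using lattice_complete_frontier_on_separator[OF L C comp, of "\<lambda>w. fst (p w)" "\<lambda>w. snd (p w)"]
      facet_rel_interior_not_interior[OF F x] p by blast
  have "F = C \<inter> {y. fst (p w) \<bullet> y = fst (p w) \<bullet> x}"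
    using C p[OF w(1)] F x w(2)
    by (intro facet_eq_slab_face) (auto simp: convex_body_def diameter_separator_def diameter_slab_def)
  then show False
    using p[OF w(1)] w(2) by auto
qed

lemma facets_midpoint_interior:
  assumes L: "is_lattice L" and C: "convex_body C" and comp: "lattice_complete L C"
    and F: "F1 facet_of C" "F2 facet_of C" "F1 \<noteq> F2"
    and x: "x1 \<in> rel_interior F1" "x2 \<in> rel_interior F2"
  shows "midpoint x1 x2 \<in> interior C"
proof (rule ccontr)
  assume "midpoint x1 x2 \<notin> interior C"
  obtain u h where sep: "\<And>w. w \<in> diameter_directions L C \<Longrightarrow> diameter_separator L C w (u w) (h w)"
    using diameter_separators_exist[OF L C] by blast
  have cv: "convex C" and iC: "interior C \<noteq> {}"
    using C by (auto simp: convex_body_def)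
  have "x1 \<in> C" "x2 \<in> C"
    using facet_rel_interior_not_interior F x by blast+
  then have "midpoint x1 x2 \<in> C"
    using cv by (simp add: midpoint_def convexD scaleR_right_distrib)
  then obtain w where w: "w \<in> diameter_directions L C"
    "u w \<bullet> midpoint x1 x2 = h w - lattice_diam L C * (u w \<bullet> w) \<or> u w \<bullet> midpoint x1 x2 = h w"
    using lattice_complete_frontier_on_separator[OF L C comp sep] \<open>midpoint x1 x2 \<notin> interior C\<close>
    by blast
  have slab: "C \<subseteq> slab (u w) (h w - lattice_diam L C * (u w \<bullet> w)) (h w)" "u w \<noteq> 0"
    using sep[OF w(1)] by (auto simp: diameter_separator_def diameter_slab_def)
  have mid: "u w \<bullet> midpoint x1 x2 = (u w \<bullet> x1 + u w \<bullet> x2) / 2"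
    by (simp add: midpoint_def inner_add_right)
  have bounds: "h w - lattice_diam L C * (u w \<bullet> w) \<le> u w \<bullet> x \<and> u w \<bullet> x \<le> h w"
    if "x \<in> C" for x
    using slab(1) that by (auto simp: slab_def)
  have "u w \<bullet> x1 = u w \<bullet> midpoint x1 x2 \<and> u w \<bullet> x2 = u w \<bullet> midpoint x1 x2"
    using w(2) mid bounds[OF \<open>x1 \<in> C\<close>] bounds[OF \<open>x2 \<in> C\<close>] by auto
  then have "u w \<bullet> x1 = u w \<bullet> midpoint x1 x2" "u w \<bullet> x2 = u w \<bullet> midpoint x1 x2"
    by simp_all
  then have "u w \<bullet> x1 = h w - lattice_diam L C * (u w \<bullet> w) \<or> u w \<bullet> x1 = h w"
    "u w \<bullet> x2 = h w - lattice_diam L C * (u w \<bullet> w) \<or> u w \<bullet> x2 = h w"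
    using w(2) by auto
  then have "F1 = C \<inter> {y. u w \<bullet> y = u w \<bullet> x1}" "F2 = C \<inter> {y. u w \<bullet> y = u w \<bullet> x2}"
    using facet_eq_slab_face[OF cv iC slab(2,1)] F x by blast+
  then show False
    using F(3) \<open>u w \<bullet> x1 = u w \<bullet> midpoint x1 x2\<close> \<open>u w \<bullet> x2 = u w \<bullet> midpoint x1 x2\<close> by simp
qed

lemma contact_directions_congruent_mod_2:
  assumes L: "is_lattice L" and C: "convex_body C" and comp: "lattice_complete L C"
    and F: "F1 facet_of C" "F2 facet_of C" "F1 \<noteq> F2"
    and x1: "x1 \<in> rel_interior F1" "x1 - lattice_diam L C *\<^sub>R w1 \<in> C"
    and x2: "x2 \<in> rel_interior F2" "x2 - lattice_diam L C *\<^sub>R w2 \<in> C"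
    and w1: "w1 \<in> L" and z: "z \<in> L" "w1 - w2 = 2 *\<^sub>R z"
  shows "w1 = - w2"
proof (rule ccontr)
  let ?d = "lattice_diam L C"
  define m where "m = w1 - z"
  assume "w1 \<noteq> - w2"
  have m: "2 *\<^sub>R m = w1 + w2"
    using z(2) unfolding m_def by (simp add: scaleR_2 algebra_simps)
  then have "m \<noteq> 0"
    using \<open>w1 \<noteq> - w2\<close> by (auto simp: add_eq_0_iff)
  have "m \<in> L"
    unfolding m_def using w1 z(1) L is_lattice_imp_discrete_subgroup add_subgroup_diff
    by (auto simp: discrete_subgroup_def)
  have "midpoint x1 x2 - ?d *\<^sub>R m = midpoint (x1 - ?d *\<^sub>R w1) (x2 - ?d *\<^sub>R w2)"
    using arg_cong[OF m, of "\<lambda>v. (?d / 2) *\<^sub>R v"] by (simp add: midpoint_def algebra_simps)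
  then have "midpoint x1 x2 - ?d *\<^sub>R m \<in> C"
    using C x1(2) x2(2) by (simp add: midpoint_def convexD scaleR_right_distrib convex_body_def)
  moreover have "midpoint x1 x2 - ?d *\<^sub>R m + ?d *\<^sub>R m \<in> interior C"
    using facets_midpoint_interior[OF L C comp F x1(1) x2(1)] by simp
  moreover have "bounded C"
    using C by (simp add: convex_body_def compact_imp_bounded)
  ultimately have "?d < ?d"
    using lattice_diam_gt_interior_chord[OF L] lattice_diam_pos[OF L C] \<open>m \<in> L\<close> \<open>m \<noteq> 0\<close>
    by blast
  then show False
    by simp
qed

section \<open>Classes modulo two in discrete subgroups\<close>

definition coset_mod2 :: "'a::real_vector set \<Rightarrow> 'a \<Rightarrow> 'a set" where
  "coset_mod2 G x = (\<lambda>z. x + 2 *\<^sub>R z) ` G"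

lemma coset_mod2_eq_iff:
  assumes G: "add_subgroup G"
  shows "coset_mod2 G x = coset_mod2 G y \<longleftrightarrow> (\<exists>z\<in>G. x - y = 2 *\<^sub>R z)"
proof
  assume "coset_mod2 G x = coset_mod2 G y"
  moreover have "x \<in> coset_mod2 G x"
    using add_subgroup_0[OF G] unfolding coset_mod2_def by force
  ultimately obtain z where "z \<in> G" "x = y + 2 *\<^sub>R z"
    unfolding coset_mod2_def by auto
  then show "\<exists>z\<in>G. x - y = 2 *\<^sub>R z"
    by auto
next
  assume "\<exists>z\<in>G. x - y = 2 *\<^sub>R z"
  then obtain z0 where z0: "z0 \<in> G" "x = y + 2 *\<^sub>R z0"
    by (metis add.commute diff_add_cancel)
  show "coset_mod2 G x = coset_mod2 G y"
  proof (intro equalityI subsetI)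
    fix v assume "v \<in> coset_mod2 G x"
    then obtain z where "z \<in> G" "v = y + 2 *\<^sub>R (z0 + z)"
      unfolding coset_mod2_def using z0(2) by (auto simp: algebra_simps)
    then show "v \<in> coset_mod2 G y"
      unfolding coset_mod2_def using z0(1) add_subgroup_add[OF G] by blast
  next
    fix v assume "v \<in> coset_mod2 G y"
    then obtain z where "z \<in> G" "v = x + 2 *\<^sub>R (z - z0)"
      unfolding coset_mod2_def using z0(2) by (auto simp: algebra_simps)
    then show "v \<in> coset_mod2 G x"
      unfolding coset_mod2_def using z0(1) add_subgroup_diff[OF G] by blast
  qed
qed

lemma card_le_twice_card_image:
  assumes "finite S"
    and fibre: "\<And>x y z. x \<in> S \<Longrightarrow> y \<in> S \<Longrightarrow> z \<in> S \<Longrightarrow> f y = f x \<Longrightarrow> f z = f x \<Longrightarrow>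
      y \<noteq> x \<Longrightarrow> z \<noteq> x \<Longrightarrow> y = z"
  shows "card S \<le> 2 * card (f ` S)"
proof -
  have "card {x \<in> S. f x = t} \<le> 2" for t
  proof (cases "\<exists>x\<in>S. f x = t")
    case True
    then obtain x where x: "x \<in> S" "f x = t"
      by blast
    have "card ({x \<in> S. f x = t} - {x}) \<le> Suc 0"
      using assms(1) fibre[OF x(1)] x(2) by (subst card_le_Suc0_iff_eq) auto
    moreover have "card {x \<in> S. f x = t} = Suc (card ({x \<in> S. f x = t} - {x}))"
      using assms(1) x by (intro card.remove) auto
    ultimately show ?thesis
      by simp
  next
    case False
    then have "{x \<in> S. f x = t} = {}"
      by blast
    then show ?thesis
      by (metis card.empty le0)
  qed
  then have "(\<Sum>t\<in>f ` S. card {x \<in> S. f x = t}) \<le> 2 * card (f ` S)"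
    using sum_bounded_above[of "f ` S" "\<lambda>t. card {x \<in> S. f x = t}" 2] by simp
  moreover have "S = (\<Union>t\<in>f ` S. {x \<in> S. f x = t})"
    by blast
  then have "card S \<le> (\<Sum>t\<in>f ` S. card {x \<in> S. f x = t})"
    using card_UN_le[of "f ` S" "\<lambda>t. {x \<in> S. f x = t}"] assms(1) by simp
  ultimately show ?thesis
    by linarith
qed

definition proj_perp :: "'a::real_inner \<Rightarrow> 'a \<Rightarrow> 'a" where
  "proj_perp g x = x - (x \<bullet> g / (g \<bullet> g)) *\<^sub>R g"

lemma linear_proj_perp: "linear (proj_perp g)"
  unfolding proj_perp_def
  by (intro linearI) (auto simp: inner_add_left add_divide_distrib algebra_simps)

lemma inner_proj_perp: "g \<bullet> proj_perp g x = 0"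
  by (cases "g = 0") (auto simp: proj_perp_def inner_diff_right inner_commute)

lemma proj_perp_diff_scaleR: "proj_perp g (x - c *\<^sub>R g) = proj_perp g x"
  by (cases "g = 0") (auto simp: proj_perp_def inner_diff_left diff_divide_distrib algebra_simps)

lemma proj_perp_eq_0_imp: "proj_perp g x = 0 \<Longrightarrow> x \<in> span {g}"
  unfolding proj_perp_def by (metis eq_iff_diff_eq_0 span_base span_scale singletonI)

lemma proj_perp_in_span: "x \<in> span S \<Longrightarrow> g \<in> span S \<Longrightarrow> proj_perp g x \<in> span S"
  unfolding proj_perp_def by (intro span_diff span_scale)

lemma add_subgroup_linear_image:
  assumes G: "add_subgroup G" and f: "linear f"
  shows "add_subgroup (f ` G)"
  unfolding add_subgroup_def
proof (intro conjI ballI)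
  show "0 \<in> f ` G"
    using add_subgroup_0[OF G] linear_0[OF f] by (metis image_eqI)
next
  fix x y assume "x \<in> f ` G" "y \<in> f ` G"
  then obtain a b where "a \<in> G" "b \<in> G" "x = f a" "y = f b"
    by blast
  then show "x + y \<in> f ` G"
    using add_subgroup_add[OF G] linear_add[OF f] by (metis image_eqI)
next
  fix x assume "x \<in> f ` G"
  then obtain a where "a \<in> G" "x = f a"
    by blast
  then show "- x \<in> f ` G"
    using add_subgroup_uminus[OF G] linear_neg[OF f] by (metis image_eqI)
qed

lemma proj_perp_short_preimage:
  assumes G: "add_subgroup G" and "g \<in> G" "x \<in> G" "norm (proj_perp g x) \<le> 1"
  obtains x' where "x' \<in> G" "norm x' \<le> 1 + norm g" "proj_perp g x' = proj_perp g x"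
proof -
  define c where "c = x \<bullet> g / (g \<bullet> g)"
  define x' where "x' = x - of_int \<lfloor>c + 1 / 2\<rfloor> *\<^sub>R g"
  have "x' \<in> G"
    unfolding x'_def using assms add_subgroup_diff add_subgroup_scaleR_of_int by blast
  moreover have "norm x' \<le> 1 + norm g"
  proof -
    have "x' = proj_perp g x + (c - of_int \<lfloor>c + 1 / 2\<rfloor>) *\<^sub>R g"
      unfolding x'_def proj_perp_def c_def by (simp add: algebra_simps)
    then have "norm x' \<le> norm (proj_perp g x) + norm ((c - of_int \<lfloor>c + 1 / 2\<rfloor>) *\<^sub>R g)"
      by (metis norm_triangle_ineq)
    also have "\<dots> = norm (proj_perp g x) + \<bar>c - of_int \<lfloor>c + 1 / 2\<rfloor>\<bar> * norm g"
      by simp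
    also have "\<dots> \<le> 1 + 1 * norm g"
      using assms(4) by (intro add_mono mult_right_mono) (simp, linarith, simp)
    finally show ?thesis
      by simp
  qed
  moreover have "proj_perp g x' = proj_perp g x"
    unfolding x'_def by (rule proj_perp_diff_scaleR)
  ultimately show ?thesis
    using that by blast
qed

lemma discrete_subgroup_image_proj_perp:
  fixes G :: "'a::euclidean_space set"
  assumes G: "discrete_subgroup G" and g: "g \<in> G"
  shows "discrete_subgroup (proj_perp g ` G)"
proof -
  let ?p = "proj_perp g"
  have sub: "add_subgroup G"
    using G by (simp add: discrete_subgroup_def)
  define N where "N = ?p ` (G \<inter> cball 0 (1 + norm g)) - {0}"
  define e where "e = Min (insert 1 (norm ` N))"
  have "finite N"
    unfolding N_def using discrete_subgroup_finite_Int_bounded[OF G bounded_cball] by simp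
  then have "e > 0"
    unfolding e_def by (auto simp: N_def)
  moreover have "e \<le> norm y" if y: "y \<in> ?p ` G" "y \<noteq> 0" for y
  proof (cases "1 \<le> norm y")
    case True
    then show ?thesis
      using \<open>finite N\<close> unfolding e_def by (meson Min_le finite_imageI finite_insert insertI1 order_trans)
  next
    case False
    obtain x where x: "x \<in> G" "y = ?p x"
      using y(1) by blast
    then obtain x' where "x' \<in> G" "norm x' \<le> 1 + norm g" "?p x' = y"
      using proj_perp_short_preimage[OF sub g x(1)] False by force
    then have "y \<in> N"
      unfolding N_def using y(2) by auto
    then show ?thesis
      using \<open>finite N\<close> unfolding e_def by simp
  qed
  ultimately show ?thesis
    using add_subgroup_linear_image[OF sub linear_proj_perp] by (intro discrete_subgroupI)
qed

lemma dim_image_proj_perp_less: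
  fixes G :: "'a::euclidean_space set"
  assumes "g \<in> G" "g \<noteq> 0"
  shows "dim (proj_perp g ` G) < dim G"
proof -
  have g: "g \<in> span G"
    using assms(1) by (rule span_base)
  have "proj_perp g ` G \<subseteq> span G"
    using g by (auto intro: proj_perp_in_span span_base)
  then have sub: "span (proj_perp g ` G) \<subseteq> span G"
    using span_mono span_span by blast
  have "span (proj_perp g ` G) \<subseteq> {y. g \<bullet> y = 0}"
    by (intro span_minimal subspace_hyperplane) (auto simp: inner_proj_perp)
  then have "g \<notin> span (proj_perp g ` G)"
    using assms(2) by auto
  then have "span (proj_perp g ` G) \<subset> span G"
    using sub g by blast
  then show ?thesis
    by (rule dim_psubset)
qed

lemma congruent_mod2_if_proj_perp_congruent:
  assumes G: "add_subgroup G" and "g \<in> G"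
    and line: "G \<inter> span {g} = range (\<lambda>n::int. of_int n *\<^sub>R g)"
    and x: "x \<in> G" "y \<in> G"
    and eq: "coset_mod2 (proj_perp g ` G) (proj_perp g x) = coset_mod2 (proj_perp g ` G) (proj_perp g y)"
  shows "(\<exists>z\<in>G. x - y = 2 *\<^sub>R z) \<or> (\<exists>z\<in>G. x - y - g = 2 *\<^sub>R z)"
proof -
  let ?p = "proj_perp g"
  obtain z where z: "z \<in> G" "?p x - ?p y = 2 *\<^sub>R ?p z"
    using eq coset_mod2_eq_iff[OF add_subgroup_linear_image[OF G linear_proj_perp]] by blast
  define v where "v = x - y - 2 *\<^sub>R z"
  have "v \<in> G"
    unfolding v_def scaleR_2
    using add_subgroup_diff[OF G add_subgroup_diff[OF G x] add_subgroup_add[OF G z(1) z(1)]] .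
  moreover have "?p v = 0"
    using z(2) by (simp add: v_def linear_diff[OF linear_proj_perp] linear_scale[OF linear_proj_perp])
  then have "v \<in> span {g}"
    by (rule proj_perp_eq_0_imp)
  ultimately obtain k :: int where k: "v = of_int k *\<^sub>R g"
    using line by blast
  have "\<exists>j. k = 2 * j \<or> k = 2 * j + 1"
    by presburger
  then obtain j :: int where "k = 2 * j \<or> k = 2 * j + 1"
    by blast
  moreover have "z + of_int j *\<^sub>R g \<in> G"
    using add_subgroup_add[OF G z(1) add_subgroup_scaleR_of_int[OF G \<open>g \<in> G\<close>]] .
  moreover have "x - y = 2 *\<^sub>R (z + of_int j *\<^sub>R g)" if "k = 2 * j"
    using k that unfolding v_def by (simp add: algebra_simps)
  moreover have "x - y - g = 2 *\<^sub>R (z + of_int j *\<^sub>R g)" if "k = 2 * j + 1"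
    using k that unfolding v_def by (simp add: algebra_simps)
  ultimately show ?thesis
    by blast
qed

lemma card_coset_mod2_image_le_twice_proj_perp:
  assumes G: "add_subgroup G" and "g \<in> G"
    and line: "G \<inter> span {g} = range (\<lambda>n::int. of_int n *\<^sub>R g)"
    and S: "finite S" "S \<subseteq> G"
  shows "card (coset_mod2 G ` S) \<le> 2 * card (coset_mod2 (proj_perp g ` G) ` proj_perp g ` S)"
proof -
  let ?c' = "\<lambda>x. coset_mod2 (proj_perp g ` G) (proj_perp g x)"
  have "\<exists>T. T \<subseteq> S \<and> inj_on (coset_mod2 G) T \<and> coset_mod2 G ` S = coset_mod2 G ` T"
    by (rule subset_image_inj[THEN iffD1]) simp
  then obtain T where T: "T \<subseteq> S" "inj_on (coset_mod2 G) T" "coset_mod2 G ` S = coset_mod2 G ` T"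
    by blast
  have odd: "\<exists>v\<in>G. a - b - g = 2 *\<^sub>R v" if ab: "a \<in> T" "b \<in> T" "a \<noteq> b" "?c' a = ?c' b" for a b
  proof -
    have "a \<in> G" "b \<in> G"
      using ab T(1) S(2) by auto
    have "coset_mod2 G a \<noteq> coset_mod2 G b"
      using T(2) ab(1-3) by (meson inj_onD)
    then have "\<not> (\<exists>v\<in>G. a - b = 2 *\<^sub>R v)"
      using coset_mod2_eq_iff[OF G] by blast
    then show ?thesis
      using congruent_mod2_if_proj_perp_congruent[OF G \<open>g \<in> G\<close> line \<open>a \<in> G\<close> \<open>b \<in> G\<close> ab(4)]
      by blast
  qed
  have "card (coset_mod2 G ` S) = card T"
    using T(2,3) card_image by metis
  also have "\<dots> \<le> 2 * card (?c' ` T)"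
  proof (rule card_le_twice_card_image)
    show "finite T"
      using T(1) S(1) finite_subset by blast
  next
    fix x y z assume xyz: "x \<in> T" "y \<in> T" "z \<in> T" "?c' y = ?c' x" "?c' z = ?c' x" "y \<noteq> x" "z \<noteq> x"
    obtain v1 v2 where v: "v1 \<in> G" "x - y - g = 2 *\<^sub>R v1" "v2 \<in> G" "x - z - g = 2 *\<^sub>R v2"
      using odd[of x y] odd[of x z] xyz by metis
    then have "z - y = 2 *\<^sub>R (v1 - v2)" "v1 - v2 \<in> G"
      using add_subgroup_diff[OF G] by (auto simp: algebra_simps)
    then have "coset_mod2 G z = coset_mod2 G y"
      using coset_mod2_eq_iff[OF G] by blast
    then show "y = z"
      using inj_onD[OF T(2) _ xyz(3,2)] by simp
  qed
  also have "card (?c' ` T) \<le> card (coset_mod2 (proj_perp g ` G) ` proj_perp g ` S)"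
    using T(1) S(1) by (intro card_mono) (auto simp: image_image)
  finally show ?thesis
    by simp
qed

lemma card_coset_mod2_image_le:
  fixes G :: "'a::euclidean_space set"
  assumes "discrete_subgroup G" "dim G \<le> n" "finite S" "S \<subseteq> G"
  shows "card (coset_mod2 G ` S) \<le> 2 ^ n"
  using assms
proof (induction n arbitrary: G S)
  case 0
  then have "S \<subseteq> {0}"
    using dim_eq_0 by blast
  then have "card (coset_mod2 G ` S) \<le> card {0::'a}"
    using card_image_le card_mono finite_subset by (metis finite.emptyI finite.insertI order_trans)
  then show ?case
    by simp
next
  case (Suc n)
  show ?case
  proof (cases "G \<subseteq> {0}")
    case True
    then have "card (coset_mod2 G ` S) \<le> card {0::'a}"
      using Suc.prems(4) card_image_le card_mono finite_subset
      by (metis finite.emptyI finite.insertI order_trans)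
    also have "\<dots> \<le> 2 ^ Suc n"
      by simp
    finally show ?thesis .
  next
    case False
    then obtain x where "x \<in> G" "x \<noteq> 0"
      by blast
    then obtain g where g: "g \<in> G" "g \<noteq> 0" and min: "\<And>y. y \<in> G \<Longrightarrow> y \<noteq> 0 \<Longrightarrow> norm g \<le> norm y"
      using discrete_subgroup_min_norm[OF Suc.prems(1), of x UNIV] by auto
    have sub: "add_subgroup G"
      using Suc.prems(1) by (simp add: discrete_subgroup_def)
    have line: "G \<inter> span {g} = range (\<lambda>n::int. of_int n *\<^sub>R g)"
      using add_subgroup_line_eq_int_multiples[OF sub g(1)] min by blast
    have "card (coset_mod2 G ` S) \<le> 2 * card (coset_mod2 (proj_perp g ` G) ` proj_perp g ` S)"
      using card_coset_mod2_image_le_twice_proj_perp[OF sub g(1) line Suc.prems(3,4)] .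
    also have "card (coset_mod2 (proj_perp g ` G) ` proj_perp g ` S) \<le> 2 ^ n"
    proof (rule Suc.IH)
      show "discrete_subgroup (proj_perp g ` G)"
        using discrete_subgroup_image_proj_perp[OF Suc.prems(1) g(1)] .
      show "dim (proj_perp g ` G) \<le> n"
        using dim_image_proj_perp_less[OF g] Suc.prems(2) by simp
    qed (use Suc.prems(3,4) in auto)
    finally show ?thesis
      by simp
  qed
qed

lemma card_le_by_classes_mod2:
  fixes G :: "'a::euclidean_space set"
  assumes G: "discrete_subgroup G" and S: "finite S" and w: "\<And>s. s \<in> S \<Longrightarrow> w s \<in> G"
    and not_double: "\<And>s z. s \<in> S \<Longrightarrow> z \<in> G \<Longrightarrow> w s \<noteq> 2 *\<^sub>R z"
    and pair: "\<And>s t z. s \<in> S \<Longrightarrow> t \<in> S \<Longrightarrow> s \<noteq> t \<Longrightarrow> z \<in> G \<Longrightarrow> w s - w t = 2 *\<^sub>R z \<Longrightarrow>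
      w s = - w t"
  shows "card S \<le> 2 ^ (dim G + 1) - 2"
proof -
  let ?c = "coset_mod2 G"
  have sub: "add_subgroup G"
    using G by (simp add: discrete_subgroup_def)
  have opposite: "w s = - w t" if "s \<in> S" "t \<in> S" "s \<noteq> t" "?c (w s) = ?c (w t)" for s t
    using that pair coset_mod2_eq_iff[OF sub] by blast
  have inj: "s = t" if "s \<in> S" "t \<in> S" "w s = w t" for s t
  proof (rule ccontr)
    assume "s \<noteq> t"
    then have "w s = - w s"
      using opposite[OF that(1,2)] that(3) by simp
    then have "2 *\<^sub>R w s = 0"
      by (simp add: scaleR_2 eq_neg_iff_add_eq_0)
    then have "w s = 0"
      by simp
    then show False
      using not_double[OF that(1) add_subgroup_0[OF sub]] by simp
  qed
  have "card S \<le> 2 * card ((\<lambda>s. ?c (w s)) ` S)"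
  proof (rule card_le_twice_card_image[OF S])
    fix s t r assume "s \<in> S" "t \<in> S" "r \<in> S" "?c (w t) = ?c (w s)" "?c (w r) = ?c (w s)"
      "t \<noteq> s" "r \<noteq> s"
    then have "w t = w r"
      using opposite by metis
    then show "t = r"
      using inj \<open>t \<in> S\<close> \<open>r \<in> S\<close> by blast
  qed
  moreover have "?c 0 \<notin> (\<lambda>s. ?c (w s)) ` S"
  proof
    assume "?c 0 \<in> (\<lambda>s. ?c (w s)) ` S"
    then obtain s where "s \<in> S" "?c (w s) = ?c 0"
      by auto
    then obtain z where "z \<in> G" "w s - 0 = 2 *\<^sub>R z"
      using coset_mod2_eq_iff[OF sub] by blast
    then show False
      using not_double[OF \<open>s \<in> S\<close>] by simp
  qed
  then have "card (?c ` insert 0 (w ` S)) = card ((\<lambda>s. ?c (w s)) ` S) + 1"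
    using S by (simp add: image_image)
  moreover have "card (?c ` insert 0 (w ` S)) \<le> 2 ^ dim G"
    using S w add_subgroup_0[OF sub] by (intro card_coset_mod2_image_le[OF G order_refl]) auto
  ultimately show ?thesis
    by simp
qed

section \<open>The facet bound\<close>

lemma contact_direction_not_double:
  assumes L: "is_lattice L" and C: "convex_body C"
    and x: "x \<in> C" "x - lattice_diam L C *\<^sub>R w \<in> C" and "w \<noteq> 0" and z: "z \<in> L"
  shows "w \<noteq> 2 *\<^sub>R z"
proof
  let ?d = "lattice_diam L C"
  assume w: "w = 2 *\<^sub>R z"
  then have "z \<noteq> 0"
    using \<open>w \<noteq> 0\<close> by auto
  have "x - ?d *\<^sub>R w + (2 * ?d) *\<^sub>R z = x"
    using w by simp
  then have "x - ?d *\<^sub>R w + (2 * ?d) *\<^sub>R z \<in> C"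
    using x(1) by simp
  moreover have "bounded C"
    using C by (simp add: convex_body_def compact_imp_bounded)
  ultimately have "2 * ?d \<le> ?d"
    using lattice_diam_ge[OF L _ x(2) _ z \<open>z \<noteq> 0\<close>] lattice_diam_pos[OF L C] by simp
  then show False
    using lattice_diam_pos[OF L C] by simp
qed

lemma facet_contact_directions:
  assumes L: "is_lattice L" and C: "convex_body C" and comp: "lattice_complete L C"
  obtains w where "\<And>F. F facet_of C \<Longrightarrow> w F \<in> diameter_directions L C"
    "\<And>F z. F facet_of C \<Longrightarrow> z \<in> L \<Longrightarrow> w F \<noteq> 2 *\<^sub>R z"
    "\<And>F1 F2 z. F1 facet_of C \<Longrightarrow> F2 facet_of C \<Longrightarrow> F1 \<noteq> F2 \<Longrightarrow> z \<in> L \<Longrightarrow>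
      w F1 - w F2 = 2 *\<^sub>R z \<Longrightarrow> w F1 = - w F2"
proof -
  let ?d = "lattice_diam L C"
  have "\<exists>p. fst p \<in> rel_interior F \<and> snd p \<in> L \<and> snd p \<noteq> 0 \<and> fst p - ?d *\<^sub>R snd p \<in> C"
    if F: "F facet_of C" for F
  proof -
    obtain x g where "x \<in> rel_interior F" "g \<in> L" "g \<noteq> 0" "x - ?d *\<^sub>R g \<in> C"
      using facet_rel_interior_contact[OF L C comp F] by blast
    then show ?thesis
      by (intro exI[of _ "(x, g)"]) simp
  qed
  then obtain p where p: "\<And>F. F facet_of C \<Longrightarrow>
      fst (p F) \<in> rel_interior F \<and> snd (p F) \<in> L \<and> snd (p F) \<noteq> 0 \<and> fst (p F) - ?d *\<^sub>R snd (p F) \<in> C"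
    by metis
  have x: "fst (p F) \<in> C" if "F facet_of C" for F
    using facet_rel_interior_not_interior(1)[OF that] p[OF that] by blast
  show ?thesis
  proof (rule that[of "\<lambda>F. snd (p F)"])
    fix F assume F: "F facet_of C"
    have "fst (p F) - ?d *\<^sub>R snd (p F) + ?d *\<^sub>R snd (p F) \<in> C"
      using x[OF F] by simp
    then show "snd (p F) \<in> diameter_directions L C"
      using p[OF F] C diameter_directions_iff by (metis convex_body_def)
    show "snd (p F) \<noteq> 2 *\<^sub>R z" if "z \<in> L" for z
      using contact_direction_not_double[OF L C x[OF F] _ _ that] p[OF F] by blast
  next
    fix F1 F2 z assume "F1 facet_of C" "F2 facet_of C" "F1 \<noteq> F2" "z \<in> L"
      "snd (p F1) - snd (p F2) = 2 *\<^sub>R z"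
    then show "snd (p F1) = - snd (p F2)"
      using contact_directions_congruent_mod_2[OF L C comp] p by blast
  qed
qed

lemma lattice_complete_card_facets_le:
  assumes L: "is_lattice L" and C: "convex_body C" and comp: "lattice_complete L C"
  shows "card {F. F facet_of C} \<le> 2 ^ (dim (L \<inter> span (diameter_directions L C)) + 1) - 2"
proof -
  define G where "G = L \<inter> span (diameter_directions L C)"
  obtain w where w: "\<And>F. F facet_of C \<Longrightarrow> w F \<in> diameter_directions L C"
    "\<And>F z. F facet_of C \<Longrightarrow> z \<in> L \<Longrightarrow> w F \<noteq> 2 *\<^sub>R z"
    "\<And>F1 F2 z. F1 facet_of C \<Longrightarrow> F2 facet_of C \<Longrightarrow> F1 \<noteq> F2 \<Longrightarrow> z \<in> L \<Longrightarrow>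
      w F1 - w F2 = 2 *\<^sub>R z \<Longrightarrow> w F1 = - w F2"
    using facet_contact_directions[OF L C comp] by blast
  have "discrete_subgroup G"
    unfolding G_def using is_lattice_imp_discrete_subgroup[OF L]
    by (rule discrete_subgroup_Int_subspace) simp
  moreover have "finite {F. F facet_of C}"
    using finite_polytope_faces[OF lattice_complete_imp_polytope[OF L C comp]]
    by (rule rev_finite_subset) (auto simp: facet_of_def)
  ultimately have "card {F. F facet_of C} \<le> 2 ^ (dim G + 1) - 2"
  proof (rule card_le_by_classes_mod2)
    fix F assume "F \<in> {F. F facet_of C}"
    then show "w F \<in> G"
      using w(1) span_base unfolding G_def diameter_directions_def by blast
  qed (use w(2,3) in \<open>simp add: G_def; blast\<close>)+
  then show ?thesis
    unfolding G_def .
qed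

theorem theorem3p4:
  fixes L C :: "'a::euclidean_space set"
  assumes "is_lattice L"
    and "convex_body C"
    and "lattice_complete L C"
  shows "polytope C \<and>
         card {F. F facet_of C} \<le> 2 ^ (dim (diameter_directions L C) + 1) - 2"
proof
  show "polytope C"
    using lattice_complete_imp_polytope[OF assms] .
  let ?W = "diameter_directions L C"
  have "card {F. F facet_of C} \<le> 2 ^ (dim (L \<inter> span ?W) + 1) - 2"
    using lattice_complete_card_facets_le[OF assms] .
  also have "\<dots> \<le> 2 ^ (dim ?W + 1) - 2"
    using dim_subset[of "L \<inter> span ?W" "span ?W"] by (intro diff_le_mono power_increasing) auto
  finally show "card {F. F facet_of C} \<le> 2 ^ (dim ?W + 1) - 2" .
qed

end
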